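(* Let $R$ be an integral domain, $A$ a unital $R$-algebra with involution $i$, and $(\Lambda,\ge)$ a finite partially ordered set. Then $A$ has a cell datum (with respect to $i$) whose partially ordered set is $\Lambda$ if and only if $A$ has a $\Lambda$-cell net.
   Context: An involution of an $R$-algebra is an $R$-linear algebra anti-automorphism $i$ with $i^2=\mathrm{id}$. A cell datum for a unital $R$-algebra $A$ with involution $i$ consists of a finite partially ordered set $(\Lambda,\ge)$, finite sets $\mathcal T(\lambda)$ ($\lambda\in\Lambda$), and elements $c^\lambda_{s,t}\in A$ ($s,t\in\mathcal T(\lambda)$) such that: (i) they form an $R$-basis of $A$; (ii) if $\breve A^\lambda$ denotes the $R$-span of all $c^\mu_{u,v}$ with $\mu>\lambda$, then for all $\lambda$, $s\in\mathcal T(\lambda)$, $a\in A$ there are $r^s_v(a)\in R$ with $a\,c^\lambda_{s,t}\equiv\sum_v r^s_v(a)c^\lambda_{v,t}\pmod{\breve A^\lambda}$ for every $t\in\mathcal T(\lambda)$; (iii) $i(c^\lambda_{s,t})\equiv c^\lambda_{t,s}\pmod{\breve A^\lambda}$. For a left $A$-module $M$, $i(M)=\{i(m):m\in M\}$ is the right $A$-module which is a copy of $M$ as an $R$-module with $i(m)a=i(i(a)m)$. On $M\otimes_Ri(M)$ (an $A$-$A$-bimodule) the map $i$ is the $R$-linear map $x\otimes i(y)\mapsto y\otimes i(x)$. An order ideal of $\Lambda$ is a subset $\Gamma$ such that $\lambda\in\Gamma$, $\mu\ge\lambda$ imply $\mu\in\Gamma$; write $\Gamma_{\ge\lambda}=\{\mu:\mu\ge\lambda\}$,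 $\Gamma_{>\lambda}=\{\mu:\mu>\lambda\}$. A $\Lambda$-cell net is a map $\Gamma\mapsto A_\Gamma$ from order ideals of $\Lambda$ to $i$-invariant two-sided ideals of $A$ such that: (1) $A_\emptyset=0$ and $\Gamma_1\subseteq\Gamma_2\Rightarrow A_{\Gamma_1}\subseteq A_{\Gamma_2}$; (2) writing $A_{\ge\lambda}=A_{\Gamma_{\ge\lambda}}$ and $A_{>\lambda}=A_{\Gamma_{>\lambda}}$, $A$ is the span of $\{A_{\ge\mu}:\mu\in\Lambda\}$ and $A_{>\lambda}$ is the span of $\{A_{\ge\mu}:\mu>\lambda\}$ for every $\lambda$; (3) for each $\lambda\in\Lambda$ there is a left $A$-module $M^\lambda$, finitely generated and free over $R$, such that whenever $\Gamma\subseteq\Gamma'$ are order ideals with $\Gamma'\setminus\Gamma=\{\lambda\}$ there is an $A$-$A$-bimodule isomorphism $\alpha:A_{\Gamma'}/A_\Gamma\to M^\lambda\otimes_Ri(M^\lambda)$ with $i\circ\alpha=\alpha\circ i$. *)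

theory Defs
  imports Main "Jordan_Normal_Form.Matrix"
begin

definition R_algebra :: "('r::comm_ring_1 \<Rightarrow> 'a::ring_1 \<Rightarrow> 'a) \<Rightarrow> bool" where
  "R_algebra sc \<longleftrightarrow> Modules.module sc \<and>
     (\<forall>r x y. sc r (x * y) = sc r x * y \<and> sc r (x * y) = x * sc r y)"

definition involution :: "('r::comm_ring_1 \<Rightarrow> 'a::ring_1 \<Rightarrow> 'a) \<Rightarrow> ('a \<Rightarrow> 'a) \<Rightarrow> bool" where
  "involution sc i \<longleftrightarrow>
     (\<forall>x y. i (x + y) = i x + i y) \<and> (\<forall>r x. i (sc r x) = sc r (i x)) \<and>
     (\<forall>x y. i (x * y) = i y * i x) \<and> (\<forall>x. i (i x) = x)"

text \<open>Finite partially ordered set: carrier Lam, order relation Le, where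
  (l, m) \<in> Le means l \<le> m.\<close>
definition strictly_above :: "('l \<times> 'l) set \<Rightarrow> 'l \<Rightarrow> 'l \<Rightarrow> bool" where
  "strictly_above Le m l \<longleftrightarrow> (l, m) \<in> Le \<and> l \<noteq> m"

text \<open>Cell datum. The finite index sets T(l) are taken as finite sets of naturals
  (any finite set can be recoded this way).\<close>
definition cell_upper :: "('r::comm_ring_1 \<Rightarrow> 'a::ring_1 \<Rightarrow> 'a) \<Rightarrow> 'l set \<Rightarrow> ('l \<times> 'l) set
    \<Rightarrow> ('l \<Rightarrow> nat set) \<Rightarrow> ('l \<Rightarrow> nat \<Rightarrow> nat \<Rightarrow> 'a) \<Rightarrow> 'l \<Rightarrow> 'a set" where
  "cell_upper sc Lam Le T c l =
     Modules.module.span sc {c m u v | m u v. m \<in> Lam \<and> strictly_above Le m l \<and> u \<in> T m \<and> v \<in> T m}"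

definition is_cell_datum :: "('r::comm_ring_1 \<Rightarrow> 'a::ring_1 \<Rightarrow> 'a) \<Rightarrow> ('a \<Rightarrow> 'a) \<Rightarrow> 'l set
    \<Rightarrow> ('l \<times> 'l) set \<Rightarrow> ('l \<Rightarrow> nat set) \<Rightarrow> ('l \<Rightarrow> nat \<Rightarrow> nat \<Rightarrow> 'a) \<Rightarrow> bool" where
  "is_cell_datum sc i Lam Le T c \<longleftrightarrow>
     (\<forall>l\<in>Lam. finite (T l)) \<and>
     \<comment> \<open>(i) the c's form an R-basis of A (as an indexed family)\<close>
     inj_on (\<lambda>(l, s, t). c l s t) {(l, s, t). l \<in> Lam \<and> s \<in> T l \<and> t \<in> T l} \<and>
     \<not> Modules.module.dependent sc {c l s t | l s t. l \<in> Lam \<and> s \<in> T l \<and> t \<in> T l} \<and>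
     Modules.module.span sc {c l s t | l s t. l \<in> Lam \<and> s \<in> T l \<and> t \<in> T l} = UNIV \<and>
     \<comment> \<open>(ii)\<close>
     (\<forall>l\<in>Lam. \<forall>s\<in>T l. \<forall>a. \<exists>rr :: nat \<Rightarrow> 'r. \<forall>t\<in>T l.
        a * c l s t - (\<Sum>v\<in>T l. sc (rr v) (c l v t)) \<in> cell_upper sc Lam Le T c l) \<and>
     \<comment> \<open>(iii)\<close>
     (\<forall>l\<in>Lam. \<forall>s\<in>T l. \<forall>t\<in>T l. i (c l s t) - c l t s \<in> cell_upper sc Lam Le T c l)"

definition has_cell_datum :: "('r::comm_ring_1 \<Rightarrow> 'a::ring_1 \<Rightarrow> 'a) \<Rightarrow> ('a \<Rightarrow> 'a) \<Rightarrow> 'l set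
    \<Rightarrow> ('l \<times> 'l) set \<Rightarrow> bool" where
  "has_cell_datum sc i Lam Le \<longleftrightarrow> (\<exists>T c. is_cell_datum sc i Lam Le T c)"

definition order_ideal :: "'l set \<Rightarrow> ('l \<times> 'l) set \<Rightarrow> 'l set \<Rightarrow> bool" where
  "order_ideal Lam Le G \<longleftrightarrow> G \<subseteq> Lam \<and> (\<forall>l\<in>G. \<forall>m\<in>Lam. (l, m) \<in> Le \<longrightarrow> m \<in> G)"

definition ideal_ge :: "'l set \<Rightarrow> ('l \<times> 'l) set \<Rightarrow> 'l \<Rightarrow> 'l set" where
  "ideal_ge Lam Le l = {m \<in> Lam. (l, m) \<in> Le}"

definition ideal_gt :: "'l set \<Rightarrow> ('l \<times> 'l) set \<Rightarrow> 'l \<Rightarrow> 'l set" where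
  "ideal_gt Lam Le l = {m \<in> Lam. strictly_above Le m l}"

definition two_sided_ideal :: "'a::ring_1 set \<Rightarrow> bool" where
  "two_sided_ideal I \<longleftrightarrow> 0 \<in> I \<and> (\<forall>x\<in>I. \<forall>y\<in>I. x + y \<in> I) \<and>
     (\<forall>x\<in>I. \<forall>a. a * x \<in> I \<and> x * a \<in> I)"

text \<open>A left A-module which is free of finite rank n over R is modelled as R^n
  with A acting through an R-algebra homomorphism rho : A \<rightarrow> Mat_n(R).\<close>
definition left_module_rep :: "('r::comm_ring_1 \<Rightarrow> 'a::ring_1 \<Rightarrow> 'a) \<Rightarrow> nat \<Rightarrow> ('a \<Rightarrow> 'r mat) \<Rightarrow> bool" where
  "left_module_rep sc n rho \<longleftrightarrow>
     (\<forall>a. rho a \<in> carrier_mat n n) \<and>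
     (\<forall>a b. rho (a + b) = rho a + rho b) \<and>
     (\<forall>r a. rho (sc r a) = r \<cdot>\<^sub>m rho a) \<and>
     (\<forall>a b. rho (a * b) = rho a * rho b) \<and>
     rho 1 = 1\<^sub>m n"

text \<open>For M = R^n, M \<otimes>_R i(M) is identified with n x n matrices via
  x \<otimes> i(y) \<mapsto> x y^T; then the left action is a \<cdot> X = rho(a) X, the right action is
  X \<cdot> a = X rho(i a)^T, and the map i is transposition. An A-A-bimodule isomorphism
  A_G'/A_G \<rightarrow> M \<otimes> i(M) is the same as an R-linear map alpha on A_G' onto the
  matrices, with kernel exactly A_G, intertwining the actions.\<close>
definition cell_iso :: "('r::comm_ring_1 \<Rightarrow> 'a::ring_1 \<Rightarrow> 'a) \<Rightarrow> ('a \<Rightarrow> 'a) \<Rightarrow> nat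
    \<Rightarrow> ('a \<Rightarrow> 'r mat) \<Rightarrow> 'a set \<Rightarrow> 'a set \<Rightarrow> ('a \<Rightarrow> 'r mat) \<Rightarrow> bool" where
  "cell_iso sc i n rho I I' alpha \<longleftrightarrow>
     alpha ` I' = carrier_mat n n \<and>
     (\<forall>x\<in>I'. \<forall>y\<in>I'. alpha (x + y) = alpha x + alpha y) \<and>
     (\<forall>r. \<forall>x\<in>I'. alpha (sc r x) = r \<cdot>\<^sub>m alpha x) \<and>
     (\<forall>x\<in>I'. alpha x = 0\<^sub>m n n \<longleftrightarrow> x \<in> I) \<and>
     (\<forall>a. \<forall>x\<in>I'. alpha (a * x) = rho a * alpha x) \<and>
     (\<forall>a. \<forall>x\<in>I'. alpha (x * a) = alpha x * transpose_mat (rho (i a))) \<and>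
     (\<forall>x\<in>I'. alpha (i x) = transpose_mat (alpha x))"

definition is_cell_net :: "('r::comm_ring_1 \<Rightarrow> 'a::ring_1 \<Rightarrow> 'a) \<Rightarrow> ('a \<Rightarrow> 'a) \<Rightarrow> 'l set
    \<Rightarrow> ('l \<times> 'l) set \<Rightarrow> ('l set \<Rightarrow> 'a set) \<Rightarrow> bool" where
  "is_cell_net sc i Lam Le N \<longleftrightarrow>
     (\<forall>G. order_ideal Lam Le G \<longrightarrow> two_sided_ideal (N G) \<and> i ` N G \<subseteq> N G) \<and>
     \<comment> \<open>(1)\<close>
     N {} = {0} \<and>
     (\<forall>G1 G2. order_ideal Lam Le G1 \<longrightarrow> order_ideal Lam Le G2 \<longrightarrow> G1 \<subseteq> G2 \<longrightarrow> N G1 \<subseteq> N G2) \<and>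
     \<comment> \<open>(2)\<close>
     Modules.module.span sc (\<Union>m\<in>Lam. N (ideal_ge Lam Le m)) = UNIV \<and>
     (\<forall>l\<in>Lam. N (ideal_gt Lam Le l) =
        Modules.module.span sc (\<Union>m\<in>ideal_gt Lam Le l. N (ideal_ge Lam Le m))) \<and>
     \<comment> \<open>(3)\<close>
     (\<forall>l\<in>Lam. \<exists>n rho. left_module_rep sc n rho \<and>
        (\<forall>G G'. order_ideal Lam Le G \<longrightarrow> order_ideal Lam Le G' \<longrightarrow> G \<subseteq> G' \<longrightarrow> G' - G = {l} \<longrightarrow>
           (\<exists>alpha. cell_iso sc i n rho (N G) (N G') alpha)))"

definition has_cell_net :: "('r::comm_ring_1 \<Rightarrow> 'a::ring_1 \<Rightarrow> 'a) \<Rightarrow> ('a \<Rightarrow> 'a) \<Rightarrow> 'l set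
    \<Rightarrow> ('l \<times> 'l) set \<Rightarrow> bool" where
  "has_cell_net sc i Lam Le \<longleftrightarrow> (\<exists>N. is_cell_net sc i Lam Le N)"

end

theory Submission
  imports Defs "Jordan_Normal_Form.Determinant"
begin

text \<open>From a cell datum, the spans \<open>A\<^sub>\<Gamma>\<close> of the basis elements \<open>c\<^sup>\<lambda>\<^sub>s\<^sub>t\<close> with
  \<open>\<lambda> \<in> \<Gamma>\<close> are ideals by axioms (ii) and (iii), and reading off the \<open>\<lambda>\<close>-block of
  coordinates identifies \<open>A\<^sub>\<Gamma>\<^sub>' / A\<^sub>\<Gamma>\<close> with \<open>n \<times> n\<close> matrices, i.e. with
  \<open>M \<otimes> i(M)\<close> for \<open>M = R\<^sup>n\<close>, \<open>n = |T(\<lambda>)|\<close>, on which \<open>A\<close> acts through the coefficients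
  \<open>r\<^sup>s\<^sub>v(a)\<close> of (ii).

  Conversely, from a cell net choose preimages \<open>c\<^sup>\<lambda>\<^sub>s\<^sub>t \<in> A\<^sub>\<ge>\<^sub>\<lambda>\<close> of the matrix units of
  \<open>A\<^sub>\<ge>\<^sub>\<lambda> / A\<^sub>>\<^sub>\<lambda> \<cong> M\<^sub>n(R)\<close>.  Induction down the order shows that they span \<open>A\<close>,
  and removing minimal elements one at a time shows that \<open>A\<close> is free with a basis indexed by
  the same triples \<open>(\<lambda>, s, t)\<close>.  A spanning family indexed like a basis is itself a basis,
  since a one-sided inverse of a square matrix over a commutative ring is two-sided.\<close>

section \<open>Linear algebra over a commutative ring\<close>

lemma mat_mult_left_right_inverse_comm_ring:
  fixes A B :: "'a::comm_ring_1 mat"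
  assumes A: "A \<in> carrier_mat n n" and B: "B \<in> carrier_mat n n" and AB: "A * B = 1\<^sub>m n"
  shows "B * A = 1\<^sub>m n"
proof -
  have det: "det A * det B = 1" using det_mult[OF A B] AB by simp
  define B' where "B' = det A \<cdot>\<^sub>m adj_mat B"
  have B': "B' \<in> carrier_mat n n" using adj_mat(1)[OF B] by (simp add: B'_def)
  have "B * B' = det A \<cdot>\<^sub>m (B * adj_mat B)"
    unfolding B'_def using B adj_mat(1)[OF B] by (simp add: mult_smult_distrib)
  also have "\<dots> = det A \<cdot>\<^sub>m (det B \<cdot>\<^sub>m 1\<^sub>m n)" using adj_mat(2)[OF B] by simp
  also have "\<dots> = 1\<^sub>m n" by (rule eq_matI) (auto simp: det mult.assoc[symmetric])
  finally have BB': "B * B' = 1\<^sub>m n" .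
  have "A = A * (B * B')" using A by (simp add: BB')
  also have "\<dots> = (A * B) * B'" using A B B' by (simp add: assoc_mult_mat)
  also have "\<dots> = B'" using B' by (simp add: AB)
  finally show ?thesis using BB' by simp
qed

definition mat_index :: "nat \<Rightarrow> (nat \<times> nat) set" where
  "mat_index n = {0..<n} \<times> {0..<n}"

definition mat_unit :: "nat \<Rightarrow> nat \<times> nat \<Rightarrow> 'a::comm_ring_1 mat" where
  "mat_unit n k = mat n n (\<lambda>pq. if pq = k then 1 else 0)"

lemma mat_unit_carrier [simp]: "mat_unit n k \<in> carrier_mat n n"
  unfolding mat_unit_def by (rule mat_carrier)

lemma dim_mat_unit [simp]: "dim_row (mat_unit n k) = n" "dim_col (mat_unit n k) = n"
  by (simp_all add: mat_unit_def)

lemma mat_index_iff [simp]: "(p, q) \<in> mat_index n \<longleftrightarrow> p < n \<and> q < n"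
  by (simp add: mat_index_def)

lemma finite_mat_index [simp]: "finite (mat_index n)"
  by (simp add: mat_index_def)

lemma mat_mult_mat_unit_index:
  fixes A :: "'a::comm_ring_1 mat"
  assumes A: "A \<in> carrier_mat n n" and "p < n" "q < n" "s < n"
  shows "(A * mat_unit n (s, t)) $$ (p, q) = (if q = t then A $$ (p, s) else 0)"
proof -
  have "(A * mat_unit n (s, t)) $$ (p, q) = (\<Sum>w\<in>{0..<n}. A $$ (p, w) * (if (w, q) = (s, t) then 1 else 0))"
    using assms by (simp add: mat_unit_def scalar_prod_def)
  also have "\<dots> = (\<Sum>w\<in>{0..<n}. if w = s then (if q = t then A $$ (p, s) else 0) else 0)"
    by (rule sum.cong) auto
  also have "\<dots> = (if q = t then A $$ (p, s) else 0)" using assms by simp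
  finally show ?thesis .
qed

lemma mat_eqI_mat_unit:
  fixes A B :: "'a::comm_ring_1 mat"
  assumes A: "A \<in> carrier_mat n n" and B: "B \<in> carrier_mat n n"
    and eq: "\<And>s. s < n \<Longrightarrow> A * mat_unit n (s, s) = B * mat_unit n (s, s)"
  shows "A = B"
proof (rule eq_matI)
  fix p s assume "p < dim_row B" "s < dim_col B"
  then have ps: "p < n" "s < n" using B by auto
  have "A $$ (p, s) = (A * mat_unit n (s, s)) $$ (p, s)"
    using mat_mult_mat_unit_index[OF A ps ps(2)] by simp
  also have "\<dots> = (B * mat_unit n (s, s)) $$ (p, s)" using eq ps by simp
  also have "\<dots> = B $$ (p, s)"
    using mat_mult_mat_unit_index[OF B ps ps(2)] by simp
  finally show "A $$ (p, s) = B $$ (p, s)" .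
qed (use A B in auto)

text \<open>Linear independence of an indexed family; unlike \<open>independent (f ` I)\<close> it rules out
  repetitions, as a basis indexed by cells must.\<close>
definition independent_family :: "('r::comm_ring_1 \<Rightarrow> 'b::ab_group_add \<Rightarrow> 'b) \<Rightarrow> ('i \<Rightarrow> 'b) \<Rightarrow> 'i set \<Rightarrow> bool"
  where "independent_family sc f I \<longleftrightarrow> (\<forall>g. (\<Sum>j\<in>I. sc (g j) (f j)) = 0 \<longrightarrow> (\<forall>j\<in>I. g j = 0))"

context Modules.module
begin

notation scale (infixr \<open>\<star>\<close> 75)


lemma independent_familyD:
  "independent_family scale f I \<Longrightarrow> (\<Sum>j\<in>I. g j \<star> f j) = 0 \<Longrightarrow> j \<in> I \<Longrightarrow> g j = 0"
  unfolding independent_family_def by blast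

lemma independent_family_empty: "independent_family scale f {}"
  unfolding independent_family_def by simp

lemma independent_family_cong:
  "(\<And>j. j \<in> I \<Longrightarrow> f j = f' j) \<Longrightarrow> independent_family scale f I = independent_family scale f' I"
  unfolding independent_family_def by (simp cong: sum.cong)

lemma independent_family_coeffs_eq:
  assumes "independent_family scale f I" "(\<Sum>j\<in>I. g j \<star> f j) = (\<Sum>j\<in>I. h j \<star> f j)" "j \<in> I"
  shows "g j = h j"
proof -
  have "(\<Sum>j\<in>I. (g j - h j) \<star> f j) = 0"
    using assms(2) by (simp add: scale_left_diff_distrib sum_subtractf)
  from independent_familyD[OF assms(1) this assms(3)] show ?thesis by simp
qed

lemma span_image_eq_range_sum:
  assumes "finite I"
  shows "span (f ` I) = range (\<lambda>g. \<Sum>j\<in>I. g j \<star> f j)"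
proof
  show "range (\<lambda>g. \<Sum>j\<in>I. g j \<star> f j) \<subseteq> span (f ` I)"
    by (auto intro!: span_sum span_scale intro: span_base)
next
  show "span (f ` I) \<subseteq> range (\<lambda>g. \<Sum>j\<in>I. g j \<star> f j)"
  proof
    fix x assume "x \<in> span (f ` I)"
    then show "x \<in> range (\<lambda>g. \<Sum>j\<in>I. g j \<star> f j)"
    proof (induct rule: span_induct_alt)
      case base
      show ?case by (intro range_eqI[where x="\<lambda>_. 0"]) simp
    next
      case (step c x y)
      then obtain j0 where j0: "j0 \<in> I" "x = f j0" by auto
      from step obtain g where g: "y = (\<Sum>j\<in>I. g j \<star> f j)" by auto
      have "c \<star> x + y = (\<Sum>j\<in>I. (g j + (if j = j0 then c else 0)) \<star> f j)"
        using j0 assms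
        by (simp add: g scale_left_distrib sum.distrib if_distrib[of "\<lambda>r. r \<star> f _"] add.commute
            cong: if_cong)
      then show ?case by (intro range_eqI[where x="\<lambda>j. g j + (if j = j0 then c else 0)"])
    qed
  qed
qed

lemma independent_family_inj_on:
  assumes "finite I" "independent_family scale f I"
  shows "inj_on f I"
proof (rule inj_onI, rule ccontr)
  fix j k assume jk: "j \<in> I" "k \<in> I" "f j = f k" "j \<noteq> k"
  define g where "g x = (if x = j then 1 else if x = k then -1 else (0::'a))" for x
  have "\<And>x. g x \<star> f x = (if x = j then f j else 0) - (if x = k then f k else 0)"
    using jk by (auto simp: g_def)
  then have "(\<Sum>x\<in>I. g x \<star> f x) = 0"
    using jk assms(1) by (simp add: sum_subtractf)
  from independent_familyD[OF assms(2) this jk(1)] show False by (simp add: g_def)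
qed

lemma independent_family_independent:
  assumes "finite I" "independent_family scale f I"
  shows "independent (f ` I)"
  unfolding independent_explicit_module
proof (intro allI impI)
  fix t u v assume t: "finite t" "t \<subseteq> f ` I" "(\<Sum>v\<in>t. u v \<star> v) = 0" "v \<in> t"
  define g where "g j = (if f j \<in> t then u (f j) else 0)" for j
  have "(\<Sum>j\<in>I. g j \<star> f j) = (\<Sum>j\<in>I \<inter> f -` t. u (f j) \<star> f j)"
    using assms(1)
    by (simp add: g_def if_distrib[of "\<lambda>r. r \<star> f _"] sum.If_cases Int_def cong: if_cong)
  also have "\<dots> = (\<Sum>v\<in>f ` (I \<inter> f -` t). u v \<star> v)"
    by (subst sum.reindex) (auto intro: inj_on_subset[OF independent_family_inj_on[OF assms]])
  also have "f ` (I \<inter> f -` t) = t" using t(2) by auto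
  finally have "(\<Sum>j\<in>I. g j \<star> f j) = 0" using t(3) by simp
  moreover obtain j where "j \<in> I" "v = f j" using t by auto
  ultimately show "u v = 0" using independent_familyD[OF assms(2)] t(4) by (force simp: g_def)
qed

lemma independent_familyI:
  assumes "finite I" "inj_on f I" "independent (f ` I)"
  shows "independent_family scale f I"
  unfolding independent_family_def
proof (intro allI impI ballI)
  fix g j assume s: "(\<Sum>j\<in>I. g j \<star> f j) = 0" and j: "j \<in> I"
  define u where "u v = g (the_inv_into I f v)" for v
  have "(\<Sum>v\<in>f ` I. u v \<star> v) = (\<Sum>j\<in>I. u (f j) \<star> f j)"
    by (simp add: sum.reindex[OF assms(2)])
  also have "\<dots> = (\<Sum>j\<in>I. g j \<star> f j)"
    by (rule sum.cong) (auto simp: u_def the_inv_into_f_f[OF assms(2)])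
  finally have "(\<Sum>v\<in>f ` I. u v \<star> v) = 0" using s by simp
  from independentD[OF assms(3) finite_imageI[OF assms(1)] order_refl this] j
  have "u (f j) = 0" by auto
  then show "g j = 0" by (simp add: u_def the_inv_into_f_f[OF assms(2) j])
qed

lemma independent_family_reindex:
  assumes "bij_betw e S I" "independent_family scale f I"
  shows "independent_family scale (\<lambda>p. f (e p)) S"
  unfolding independent_family_def
proof (intro allI impI ballI)
  fix g p assume s: "(\<Sum>p\<in>S. g p \<star> f (e p)) = 0" and p: "p \<in> S"
  define G where "G j = g (the_inv_into S e j)" for j
  have inj: "inj_on e S" using assms(1) by (simp add: bij_betw_def)
  have "(\<Sum>j\<in>I. G j \<star> f j) = (\<Sum>p\<in>S. G (e p) \<star> f (e p))"
    using sum.reindex_bij_betw[OF assms(1), of "\<lambda>j. G j \<star> f j"] by simp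
  also have "\<dots> = (\<Sum>p\<in>S. g p \<star> f (e p))"
    by (rule sum.cong) (auto simp: G_def the_inv_into_f_f[OF inj])
  finally have "(\<Sum>j\<in>I. G j \<star> f j) = 0" using s by simp
  from independent_familyD[OF assms(2) this] p assms(1) have "G (e p) = 0"
    by (auto simp: bij_betw_def)
  then show "g p = 0" by (simp add: G_def the_inv_into_f_f[OF inj p])
qed

lemma independent_family_Un:
  assumes fin: "finite I0" "finite I1" and disj: "I0 \<inter> I1 = {}"
    and indep0: "independent_family scale f I0"
    and indep1: "\<And>g. (\<Sum>j\<in>I1. g j \<star> f j) \<in> span (f ` I0) \<Longrightarrow> \<forall>j\<in>I1. g j = 0"
  shows "independent_family scale f (I0 \<union> I1)"
  unfolding independent_family_def
proof (intro allI impI)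
  fix g assume "(\<Sum>j\<in>I0 \<union> I1. g j \<star> f j) = 0"
  then have sum0: "(\<Sum>j\<in>I0. g j \<star> f j) + (\<Sum>j\<in>I1. g j \<star> f j) = 0"
    by (simp add: sum.union_disjoint[OF fin disj])
  have "(\<Sum>j\<in>I1. g j \<star> f j) = - (\<Sum>j\<in>I0. g j \<star> f j)"
    using sum0 by (simp add: eq_neg_iff_add_eq_0 add.commute)
  also have "\<dots> \<in> span (f ` I0)"
    by (intro span_neg span_sum span_scale span_base) auto
  finally have g1: "\<forall>j\<in>I1. g j = 0" by (rule indep1)
  then have "(\<Sum>j\<in>I0. g j \<star> f j) = 0" using sum0 by simp
  with g1 show "\<forall>j\<in>I0 \<union> I1. g j = 0" using independent_familyD[OF indep0] by blast
qed

lemma sum_scale_sum_swap: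
  assumes "finite S"
  shows "(\<Sum>q\<in>S. a q \<star> (\<Sum>r\<in>S. Q q r \<star> B r)) = (\<Sum>r\<in>S. (\<Sum>q\<in>S. a q * Q q r) \<star> B r)"
proof -
  have "(\<Sum>q\<in>S. a q \<star> (\<Sum>r\<in>S. Q q r \<star> B r)) = (\<Sum>q\<in>S. \<Sum>r\<in>S. (a q * Q q r) \<star> B r)"
    by (simp add: scale_sum_right)
  also have "\<dots> = (\<Sum>r\<in>S. \<Sum>q\<in>S. (a q * Q q r) \<star> B r)"
    by (rule sum.swap)
  also have "\<dots> = (\<Sum>r\<in>S. (\<Sum>q\<in>S. a q * Q q r) \<star> B r)"
    by (simp add: scale_sum_left)
  finally show ?thesis .
qed

lemma independent_family_change_of_basis:
  assumes B: "independent_family scale B S" and fin: "finite S"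
    and C: "\<And>p. C p = (\<Sum>q\<in>S. Q p q \<star> B q)"
    and QP: "\<And>p p'. p \<in> S \<Longrightarrow> p' \<in> S \<Longrightarrow> (\<Sum>r\<in>S. Q p r * P r p') = (if p = p' then 1 else 0)"
  shows "independent_family scale C S"
  unfolding independent_family_def
proof (intro allI impI ballI)
  fix g p' assume g0: "(\<Sum>p\<in>S. g p \<star> C p) = 0" and p': "p' \<in> S"
  have sum0: "(\<Sum>r\<in>S. (\<Sum>p\<in>S. g p * Q p r) \<star> B r) = 0"
    using g0 by (simp add: C sum_scale_sum_swap[OF fin])
  have gQ: "(\<Sum>p\<in>S. g p * Q p r) = 0" if "r \<in> S" for r
    by (rule independent_familyD[OF B sum0 that])
  have "g p' = (\<Sum>p\<in>S. g p * (if p = p' then 1 else 0))"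
    using p' fin by (simp add: if_distrib cong: if_cong)
  also have "\<dots> = (\<Sum>p\<in>S. g p * (\<Sum>r\<in>S. Q p r * P r p'))"
    using p' by (intro sum.cong) (simp_all add: QP)
  also have "\<dots> = (\<Sum>p\<in>S. \<Sum>r\<in>S. g p * Q p r * P r p')"
    by (simp add: sum_distrib_left mult.assoc)
  also have "\<dots> = (\<Sum>r\<in>S. \<Sum>p\<in>S. g p * Q p r * P r p')"
    by (rule sum.swap)
  also have "\<dots> = (\<Sum>r\<in>S. (\<Sum>p\<in>S. g p * Q p r) * P r p')"
    by (simp add: sum_distrib_right)
  also have "\<dots> = 0" by (simp add: gQ)
  finally show "g p' = 0" .
qed

text \<open>A surjective endomorphism of \<open>R\<^sup>n\<close> is bijective, because a one-sided inverse of a square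
  matrix over a commutative ring is two-sided.\<close>
lemma spanning_family_independent_upt:
  fixes B C :: "nat \<Rightarrow> 'b"
  assumes B: "independent_family scale B {0..<n}"
    and span_B: "span (B ` {0..<n}) = UNIV" and span_C: "span (C ` {0..<n}) = UNIV"
  shows "independent_family scale C {0..<n}"
proof -
  let ?S = "{0..<n}"
  have "\<forall>p. \<exists>g. C p = (\<Sum>q\<in>?S. g q \<star> B q)"
    using span_B span_image_eq_range_sum[of ?S B] by auto
  then obtain Q where C_eq: "\<And>p. C p = (\<Sum>q\<in>?S. Q p q \<star> B q)" by metis
  have "\<forall>p. \<exists>g. B p = (\<Sum>q\<in>?S. g q \<star> C q)"
    using span_C span_image_eq_range_sum[of ?S C] by auto
  then obtain P where B_eq: "\<And>p. B p = (\<Sum>q\<in>?S. P p q \<star> C q)" by metis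
  have PQ: "(\<Sum>q\<in>?S. P p q * Q q r) = (if r = p then 1 else 0)" if "p \<in> ?S" "r \<in> ?S" for p r
  proof (rule independent_family_coeffs_eq[OF B _ that(2)])
    have "(\<Sum>r\<in>?S. (\<Sum>q\<in>?S. P p q * Q q r) \<star> B r) = B p"
      by (simp add: B_eq[of p] C_eq sum_scale_sum_swap)
    also have "\<dots> = (\<Sum>r\<in>?S. (if r = p then 1 else 0) \<star> B r)"
      using that(1) by (simp add: if_distrib[of "\<lambda>r. r \<star> _"] cong: if_cong)
    finally show "(\<Sum>r\<in>?S. (\<Sum>q\<in>?S. P p q * Q q r) \<star> B r) = (\<Sum>r\<in>?S. (if r = p then 1 else 0) \<star> B r)" .
  qed
  define PM where "PM = mat n n (\<lambda>(p, q). P p q)"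
  define QM where "QM = mat n n (\<lambda>(p, q). Q p q)"
  have "PM * QM = 1\<^sub>m n"
    by (rule eq_matI) (auto simp: PM_def QM_def scalar_prod_def PQ)
  then have QP: "QM * PM = 1\<^sub>m n"
    by (rule mat_mult_left_right_inverse_comm_ring[rotated 2]) (auto simp: PM_def QM_def)
  show ?thesis
  proof (rule independent_family_change_of_basis[OF B _ C_eq])
    show "(\<Sum>r\<in>?S. Q p r * P r p') = (if p = p' then 1 else 0)" if "p \<in> ?S" "p' \<in> ?S" for p p'
      using that arg_cong[OF QP, of "\<lambda>M. M $$ (p, p')"] by (simp add: PM_def QM_def scalar_prod_def)
  qed simp
qed

lemma spanning_family_independent:
  assumes fin: "finite I" and b: "independent_family scale b I"
    and span_b: "span (b ` I) = UNIV" and span_c: "span (c ` I) = UNIV"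
  shows "independent_family scale c I"
proof -
  obtain e where e: "bij_betw e {0..<card I} I" using ex_bij_betw_nat_finite[OF fin] by blast
  have img: "e ` {0..<card I} = I" using e by (simp add: bij_betw_def)
  have "independent_family scale (\<lambda>p. c (e p)) {0..<card I}"
  proof (rule spanning_family_independent_upt)
    show "independent_family scale (\<lambda>p. b (e p)) {0..<card I}" by (rule independent_family_reindex[OF e b])
    show "span ((\<lambda>p. b (e p)) ` {0..<card I}) = UNIV" "span ((\<lambda>p. c (e p)) ` {0..<card I}) = UNIV"
      using span_b span_c by (simp_all add: image_image[symmetric] img)
  qed
  then have "independent_family scale (\<lambda>j. c (e (the_inv_into {0..<card I} e j))) I"
    by (rule independent_family_reindex[OF bij_betw_the_inv_into[OF e]])
  moreover have "inj_on e {0..<card I}" using e by (simp add: bij_betw_def)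
  ultimately show ?thesis
    by (subst independent_family_cong[where f' = "\<lambda>j. c (e (the_inv_into {0..<card I} e j))"])
       (auto simp: f_the_inv_into_f img)
qed

end

section \<open>Involutive algebras and cell isomorphisms\<close>

locale involutive_algebra = Modules.module sc for sc :: "'r::comm_ring_1 \<Rightarrow> 'a::ring_1 \<Rightarrow> 'a" +
  fixes i :: "'a \<Rightarrow> 'a"
  assumes scale_mult_left: "sc r (x * y) = sc r x * y"
    and scale_mult_right: "sc r (x * y) = x * sc r y"
    and i_add: "i (x + y) = i x + i y" and i_scale: "i (sc r x) = sc r (i x)"
    and i_mult: "i (x * y) = i y * i x" and i_i: "i (i x) = x"
begin

lemma two_sided_ideal_subspace:
  assumes "two_sided_ideal I"
  shows "subspace I"
proof -
  have "sc r x \<in> I" if "x \<in> I" for r x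
    using assms that scale_mult_left[of r 1 x] unfolding two_sided_ideal_def by simp
  then show ?thesis using assms unfolding two_sided_ideal_def subspace_def by blast
qed

lemma i_zero [simp]: "i 0 = 0"
  using i_add[of 0 0] by simp

context
  fixes n rho I I' alpha
  assumes iso: "cell_iso sc i n rho I I' alpha" and sub: "subspace I'"
begin

lemma cell_iso_carrier: "x \<in> I' \<Longrightarrow> alpha x \<in> carrier_mat n n"
  using iso unfolding cell_iso_def by blast

lemma cell_iso_image: "alpha ` I' = carrier_mat n n"
  using iso unfolding cell_iso_def by blast

lemma cell_iso_add: "x \<in> I' \<Longrightarrow> y \<in> I' \<Longrightarrow> alpha (x + y) = alpha x + alpha y"
  using iso unfolding cell_iso_def by blast

lemma cell_iso_scale: "x \<in> I' \<Longrightarrow> alpha (sc r x) = r \<cdot>\<^sub>m alpha x"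
  using iso unfolding cell_iso_def by blast

lemma cell_iso_kernel: "x \<in> I' \<Longrightarrow> alpha x = 0\<^sub>m n n \<longleftrightarrow> x \<in> I"
  using iso unfolding cell_iso_def by blast

lemma cell_iso_mult_left: "x \<in> I' \<Longrightarrow> alpha (a * x) = rho a * alpha x"
  using iso unfolding cell_iso_def by blast

lemma cell_iso_involution: "x \<in> I' \<Longrightarrow> alpha (i x) = transpose_mat (alpha x)"
  using iso unfolding cell_iso_def by blast

lemma cell_iso_zero: "alpha 0 = 0\<^sub>m n n"
proof -
  have 0: "0 \<in> I'" using sub by (rule subspace_0)
  have "alpha (sc 0 0) = 0 \<cdot>\<^sub>m alpha 0" using 0 by (rule cell_iso_scale)
  moreover have "0 \<cdot>\<^sub>m alpha 0 = 0\<^sub>m n n" using cell_iso_carrier[OF 0] by (intro eq_matI) auto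
  ultimately show ?thesis by simp
qed

lemma cell_iso_sum:
  assumes "finite K" and "\<And>k. k \<in> K \<Longrightarrow> x k \<in> I'"
  shows "alpha (\<Sum>k\<in>K. sc (r k) (x k)) \<in> carrier_mat n n \<and>
    (\<forall>p<n. \<forall>q<n. alpha (\<Sum>k\<in>K. sc (r k) (x k)) $$ (p, q) = (\<Sum>k\<in>K. r k * alpha (x k) $$ (p, q)))"
  using assms
proof (induct K rule: finite_induct)
  case empty
  then show ?case using cell_iso_zero by simp
next
  case (insert k K)
  have "sc (r k) (x k) \<in> I'" "(\<Sum>k\<in>K. sc (r k) (x k)) \<in> I'"
    using insert sub by (auto intro!: subspace_sum subspace_scale)
  then have "alpha (\<Sum>k\<in>insert k K. sc (r k) (x k)) = r k \<cdot>\<^sub>m alpha (x k) + alpha (\<Sum>k\<in>K. sc (r k) (x k))"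
    using insert by (simp add: cell_iso_add cell_iso_scale)
  moreover have "alpha (x k) \<in> carrier_mat n n" using cell_iso_carrier insert by simp
  ultimately show ?case using insert by auto
qed

lemma cell_iso_diff_mem:
  assumes x: "x \<in> I'" and y: "y \<in> I'" and eq: "alpha x = alpha y"
  shows "x - y \<in> I"
proof -
  have my: "sc (-1) y \<in> I'" using sub y by (rule subspace_scale)
  have "alpha (x + sc (-1) y) = alpha x + (-1) \<cdot>\<^sub>m alpha y"
    by (simp only: cell_iso_add[OF x my] cell_iso_scale[OF y])
  also have "\<dots> = 0\<^sub>m n n" using eq cell_iso_carrier[OF y] by (intro eq_matI) auto
  finally have "alpha (x - y) = 0\<^sub>m n n" by (simp add: scale_minus_left)
  moreover have "x - y \<in> I'" using sub x y by (rule subspace_diff)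
  ultimately show ?thesis using cell_iso_kernel by blast
qed

lemma cell_iso_lift_units:
  obtains d where "\<And>k. d k \<in> I'" "\<And>k. alpha (d k) = mat_unit n k"
proof -
  have "\<forall>k. \<exists>x. x \<in> I' \<and> alpha x = mat_unit n k"
  proof
    fix k
    have "mat_unit n k \<in> alpha ` I'" using cell_iso_image by simp
    then show "\<exists>x. x \<in> I' \<and> alpha x = mat_unit n k" by (auto simp: image_iff)
  qed
  then have "\<exists>d. \<forall>k. d k \<in> I' \<and> alpha (d k) = mat_unit n k" by (rule choice)
  then obtain d where "\<forall>k. d k \<in> I' \<and> alpha (d k) = mat_unit n k" by (elim exE)
  then have "\<And>k. d k \<in> I'" "\<And>k. alpha (d k) = mat_unit n k" by blast+
  then show thesis by (rule that)
qed

context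
  fixes d
  assumes lifts: "\<And>k. d k \<in> I'" "\<And>k. alpha (d k) = mat_unit n k"
begin

lemma cell_iso_sum_lifts:
  assumes K: "K \<subseteq> mat_index n"
  shows "alpha (\<Sum>k\<in>K. sc (g k) (d k)) = mat n n (\<lambda>k. if k \<in> K then g k else 0)"
proof -
  have fin: "finite K" using finite_subset[OF K] by simp
  have S: "alpha (\<Sum>k\<in>K. sc (g k) (d k)) \<in> carrier_mat n n \<and>
    (\<forall>p<n. \<forall>q<n. alpha (\<Sum>k\<in>K. sc (g k) (d k)) $$ (p, q) = (\<Sum>k\<in>K. g k * alpha (d k) $$ (p, q)))"
    by (rule cell_iso_sum[OF fin lifts(1)])
  show ?thesis
  proof (rule eq_matI)
    fix p q assume "p < dim_row (mat n n (\<lambda>k. if k \<in> K then g k else 0))"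
      "q < dim_col (mat n n (\<lambda>k. if k \<in> K then g k else 0))"
    then have pq: "p < n" "q < n" by auto
    have "(\<Sum>k\<in>K. g k * alpha (d k) $$ (p, q)) = (\<Sum>k\<in>K. if k = (p, q) then g k else 0)"
      using pq by (intro sum.cong) (auto simp: lifts(2) mat_unit_def)
    also have "\<dots> = mat n n (\<lambda>k. if k \<in> K then g k else 0) $$ (p, q)"
      using pq fin by simp
    finally show "alpha (\<Sum>k\<in>K. sc (g k) (d k)) $$ (p, q) = mat n n (\<lambda>k. if k \<in> K then g k else 0) $$ (p, q)"
      using S pq by simp
  qed (use S in auto)
qed

lemma cell_iso_decompose:
  assumes x: "x \<in> I'"
  shows "x - (\<Sum>k\<in>mat_index n. sc (alpha x $$ k) (d k)) \<in> I"
proof (rule cell_iso_diff_mem[OF x])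
  show "(\<Sum>k\<in>mat_index n. sc (alpha x $$ k) (d k)) \<in> I'"
    using lifts sub by (auto intro!: subspace_sum subspace_scale)
  have "alpha x \<in> carrier_mat n n" by (rule cell_iso_carrier[OF x])
  then show "alpha x = alpha (\<Sum>k\<in>mat_index n. sc (alpha x $$ k) (d k))"
    by (subst cell_iso_sum_lifts) (auto intro!: eq_matI)
qed

lemma cell_iso_span_lifts:
  assumes span_B: "span B = I" and "I \<subseteq> I'"
  shows "span (B \<union> d ` mat_index n) = I'"
proof
  have "B \<subseteq> I'" using span_B span_superset assms(2) by blast
  then show "span (B \<union> d ` mat_index n) \<subseteq> I'"
    using lifts(1) by (intro span_minimal[OF _ sub]) auto
next
  show "I' \<subseteq> span (B \<union> d ` mat_index n)"
  proof
    fix x assume x: "x \<in> I'"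
    let ?y = "\<Sum>k\<in>mat_index n. sc (alpha x $$ k) (d k)"
    have "x - ?y \<in> span (B \<union> d ` mat_index n)"
      using cell_iso_decompose[OF x] span_B span_mono[of B "B \<union> d ` mat_index n"] by blast
    moreover have "?y \<in> span (B \<union> d ` mat_index n)"
      by (intro span_sum span_scale span_base) auto
    ultimately have "(x - ?y) + ?y \<in> span (B \<union> d ` mat_index n)" by (rule span_add)
    then show "x \<in> span (B \<union> d ` mat_index n)" by simp
  qed
qed

lemma cell_iso_lifts_independent:
  assumes "(\<Sum>k\<in>mat_index n. sc (g k) (d k)) \<in> I" and k: "k \<in> mat_index n"
  shows "g k = 0"
proof -
  let ?v = "\<Sum>k\<in>mat_index n. sc (g k) (d k)"
  have "?v \<in> I'" using lifts sub by (auto intro!: subspace_sum subspace_scale)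
  then have "alpha ?v = 0\<^sub>m n n" using assms(1) cell_iso_kernel by blast
  then have "mat n n (\<lambda>k. if k \<in> mat_index n then g k else 0) $$ k = 0"
    using k by (subst (asm) cell_iso_sum_lifts) (auto simp: mat_index_def)
  then show ?thesis using k by (auto simp: mat_index_def)
qed

end

end

end

section \<open>Order ideals of a finite poset\<close>

locale finite_poset =
  fixes Lam :: "'l set" and Le :: "('l \<times> 'l) set"
  assumes partial_order: "partial_order_on Lam Le" and finite_Lam: "finite Lam"
begin

abbreviation "ge l \<equiv> ideal_ge Lam Le l"
abbreviation "gt l \<equiv> ideal_gt Lam Le l"
abbreviation "ord_ideal G \<equiv> order_ideal Lam Le G"

definition minimal_in :: "'l set \<Rightarrow> 'l \<Rightarrow> bool" where
  "minimal_in G l \<longleftrightarrow> l \<in> G \<and> (\<forall>m\<in>G. (m, l) \<in> Le \<longrightarrow> m = l)"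

lemma le_refl: "l \<in> Lam \<Longrightarrow> (l, l) \<in> Le"
  using partial_order unfolding partial_order_on_def preorder_on_def refl_on_def by blast

lemma le_trans: "(l, m) \<in> Le \<Longrightarrow> (m, k) \<in> Le \<Longrightarrow> (l, k) \<in> Le"
  using partial_order unfolding partial_order_on_def preorder_on_def trans_def by blast

lemma le_antisym: "(l, m) \<in> Le \<Longrightarrow> (m, l) \<in> Le \<Longrightarrow> l = m"
  using partial_order unfolding partial_order_on_def antisym_def by blast

lemma le_in_Lam: "(l, m) \<in> Le \<Longrightarrow> m \<in> Lam"
  using partial_order unfolding partial_order_on_def preorder_on_def by blast

lemma ord_ideal_subset: "ord_ideal G \<Longrightarrow> G \<subseteq> Lam"
  unfolding order_ideal_def by blast

lemma ord_ideal_up: "ord_ideal G \<Longrightarrow> m \<in> G \<Longrightarrow> (m, k) \<in> Le \<Longrightarrow> k \<in> G"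
  unfolding order_ideal_def using le_in_Lam by blast

lemma ord_ideal_Lam: "ord_ideal Lam"
  unfolding order_ideal_def by blast

lemma ord_ideal_ge: "ord_ideal (ge l)"
  unfolding order_ideal_def ideal_ge_def using le_trans by blast

lemma ord_ideal_gt: "ord_ideal (gt l)"
  unfolding order_ideal_def ideal_gt_def strictly_above_def using le_trans le_antisym by blast

lemma self_in_ge: "l \<in> Lam \<Longrightarrow> l \<in> ge l"
  unfolding ideal_ge_def using le_refl by blast

lemma self_notin_gt: "l \<notin> gt l"
  unfolding ideal_gt_def strictly_above_def by simp

lemma gt_subset_ge: "gt l \<subseteq> ge l"
  unfolding ideal_gt_def ideal_ge_def strictly_above_def by blast

lemma ge_Diff_gt: "l \<in> Lam \<Longrightarrow> ge l - gt l = {l}"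
  unfolding ideal_gt_def ideal_ge_def strictly_above_def using le_refl by blast

lemma ge_subset: "ord_ideal G \<Longrightarrow> m \<in> G \<Longrightarrow> ge m \<subseteq> G"
  unfolding ideal_ge_def using ord_ideal_up by blast

lemma ge_subset_gt: "m \<in> gt l \<Longrightarrow> ge m \<subseteq> gt l"
  using ge_subset[OF ord_ideal_gt] .

lemma gt_psubset_gt: "m \<in> gt l \<Longrightarrow> gt m \<subset> gt l"
  unfolding ideal_gt_def strictly_above_def using le_trans le_antisym by blast

lemma minimal_in_Lam: "ord_ideal G \<Longrightarrow> minimal_in G l \<Longrightarrow> l \<in> Lam"
  unfolding minimal_in_def using ord_ideal_subset by blast

lemma minimal_in_ge: "l \<in> Lam \<Longrightarrow> minimal_in (ge l) l"
  unfolding minimal_in_def ideal_ge_def using le_refl le_antisym by blast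

lemma minimal_in_notin_ge: "minimal_in G l \<Longrightarrow> m \<in> G \<Longrightarrow> m \<noteq> l \<Longrightarrow> l \<notin> ge m"
  unfolding minimal_in_def ideal_ge_def by blast

lemma minimal_in_Diff:
  assumes "ord_ideal G" "G' - G = {l}"
  shows "minimal_in G' l"
  using assms ord_ideal_up unfolding minimal_in_def by blast

lemma ord_ideal_Diff_minimal:
  assumes "ord_ideal G" "minimal_in G l"
  shows "ord_ideal (G - {l})"
  using assms le_in_Lam unfolding order_ideal_def minimal_in_def by blast

lemma exists_minimal_in:
  assumes G: "G \<subseteq> Lam" "G \<noteq> {}"
  obtains l where "minimal_in G l"
proof -
  have finG: "finite G" using G finite_Lam finite_subset by blast
  let ?f = "\<lambda>m. card (ge m)"
  have "Max (?f ` G) \<in> ?f ` G" using finG G(2) by (intro Max_in) auto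
  then obtain l where l: "l \<in> G" "?f l = Max (?f ` G)" by (auto simp: image_iff)
  have l_max: "?f m \<le> ?f l" if "m \<in> G" for m
    unfolding l(2) using finG that by (intro Max_ge) auto
  have "m = l" if m: "m \<in> G" "(m, l) \<in> Le" for m
  proof (rule ccontr)
    assume "m \<noteq> l"
    then have "ge l \<subset> ge m"
      using m G le_trans le_antisym le_refl unfolding ideal_ge_def by blast
    then have "card (ge l) < card (ge m)"
      using finite_Lam by (intro psubset_card_mono) (simp_all add: ideal_ge_def)
    then show False using l_max[OF m(1)] by simp
  qed
  then show thesis using that l(1) unfolding minimal_in_def by blast
qed

end

section \<open>A cell net yields a cell datum\<close>

locale cell_net_algebra = involutive_algebra sc i + finite_poset Lam Le
  for sc :: "'r::comm_ring_1 \<Rightarrow> 'a::ring_1 \<Rightarrow> 'a" and i and Lam :: "'l set" and Le +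
  fixes N :: "'l set \<Rightarrow> 'a set"
  assumes cell_net: "is_cell_net sc i Lam Le N"
begin

lemma cell_net_ideals: "\<forall>G. ord_ideal G \<longrightarrow> two_sided_ideal (N G) \<and> i ` N G \<subseteq> N G"
  using cell_net unfolding is_cell_net_def by (elim conjE) assumption

lemma cell_net_mono: "\<forall>G1 G2. ord_ideal G1 \<longrightarrow> ord_ideal G2 \<longrightarrow> G1 \<subseteq> G2 \<longrightarrow> N G1 \<subseteq> N G2"
  using cell_net unfolding is_cell_net_def by (elim conjE) assumption

lemma cell_net_gt: "\<forall>l\<in>Lam. N (gt l) = span (\<Union>m\<in>gt l. N (ge m))"
  using cell_net unfolding is_cell_net_def by (elim conjE) assumption

lemma cell_net_isos: "\<forall>l\<in>Lam. \<exists>n rho. left_module_rep sc n rho \<and>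
    (\<forall>G G'. ord_ideal G \<longrightarrow> ord_ideal G' \<longrightarrow> G \<subseteq> G' \<longrightarrow> G' - G = {l} \<longrightarrow>
       (\<exists>alpha. cell_iso sc i n rho (N G) (N G') alpha))"
  using cell_net unfolding is_cell_net_def by (elim conjE) assumption

lemma N_empty: "N {} = {0}"
  using cell_net unfolding is_cell_net_def by (elim conjE) assumption

lemma span_N_ge: "span (\<Union>m\<in>Lam. N (ge m)) = UNIV"
  using cell_net unfolding is_cell_net_def by (elim conjE) assumption

lemma N_ideal: "ord_ideal G \<Longrightarrow> two_sided_ideal (N G)"
  using cell_net_ideals by blast

lemma N_involution: "ord_ideal G \<Longrightarrow> x \<in> N G \<Longrightarrow> i x \<in> N G"
  using cell_net_ideals by blast

lemma N_mono: "ord_ideal G1 \<Longrightarrow> ord_ideal G2 \<Longrightarrow> G1 \<subseteq> G2 \<Longrightarrow> N G1 \<subseteq> N G2"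
  using cell_net_mono by blast

lemma N_gt: "l \<in> Lam \<Longrightarrow> N (gt l) = span (\<Union>m\<in>gt l. N (ge m))"
  using cell_net_gt by blast

lemma N_subspace: "ord_ideal G \<Longrightarrow> subspace (N G)"
  using N_ideal two_sided_ideal_subspace by blast

lemma N_mult_left: "ord_ideal G \<Longrightarrow> x \<in> N G \<Longrightarrow> a * x \<in> N G"
  using N_ideal unfolding two_sided_ideal_def by blast

lemma N_Lam: "N Lam = UNIV"
proof -
  have "N (ge m) \<subseteq> N Lam" if "m \<in> Lam" for m
    by (rule N_mono[OF ord_ideal_ge ord_ideal_Lam]) (simp add: ideal_ge_def)
  then have "span (\<Union>m\<in>Lam. N (ge m)) \<subseteq> N Lam"
    by (intro span_minimal[OF _ N_subspace[OF ord_ideal_Lam]]) blast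
  then show ?thesis using span_N_ge by blast
qed

definition has_cell_isos :: "'l \<Rightarrow> nat \<Rightarrow> ('a \<Rightarrow> 'r mat) \<Rightarrow> bool" where
  "has_cell_isos l n rho \<longleftrightarrow> left_module_rep sc n rho \<and>
     (\<forall>G G'. ord_ideal G \<longrightarrow> ord_ideal G' \<longrightarrow> G \<subseteq> G' \<longrightarrow> G' - G = {l} \<longrightarrow>
        (\<exists>alpha. cell_iso sc i n rho (N G) (N G') alpha))"

definition cell_rank :: "'l \<Rightarrow> nat" where
  "cell_rank l = fst (SOME p. has_cell_isos l (fst p) (snd p))"

definition cell_rep :: "'l \<Rightarrow> 'a \<Rightarrow> 'r mat" where
  "cell_rep l = snd (SOME p. has_cell_isos l (fst p) (snd p))"

lemma has_cell_isos_cell_rep: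
  assumes "l \<in> Lam"
  shows "has_cell_isos l (cell_rank l) (cell_rep l)"
proof -
  have "\<exists>n rho. has_cell_isos l n rho"
    using cell_net_isos assms unfolding has_cell_isos_def by (rule bspec)
  then obtain n rho where "has_cell_isos l n rho" by (elim exE)
  then have "\<exists>p. has_cell_isos l (fst p) (snd p)" by (intro exI[of _ "(n, rho)"]) simp
  from someI_ex[OF this] show ?thesis unfolding cell_rank_def cell_rep_def .
qed

lemma exists_cell_iso:
  assumes "l \<in> Lam" "ord_ideal G" "ord_ideal G'" "G \<subseteq> G'" "G' - G = {l}"
  shows "\<exists>alpha. cell_iso sc i (cell_rank l) (cell_rep l) (N G) (N G') alpha"
proof -
  have "\<forall>G G'. ord_ideal G \<longrightarrow> ord_ideal G' \<longrightarrow> G \<subseteq> G' \<longrightarrow> G' - G = {l} \<longrightarrow>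
      (\<exists>alpha. cell_iso sc i (cell_rank l) (cell_rep l) (N G) (N G') alpha)"
    using has_cell_isos_cell_rep[OF assms(1)] unfolding has_cell_isos_def by (elim conjE)
  then show ?thesis using assms(2-5) by simp
qed

lemma cell_rep_carrier:
  assumes "l \<in> Lam"
  shows "cell_rep l a \<in> carrier_mat (cell_rank l) (cell_rank l)"
  using has_cell_isos_cell_rep[OF assms] unfolding has_cell_isos_def left_module_rep_def by (elim conjE) blast

definition cell_map :: "'l \<Rightarrow> 'a \<Rightarrow> 'r mat" where
  "cell_map l = (SOME alpha. cell_iso sc i (cell_rank l) (cell_rep l) (N (gt l)) (N (ge l)) alpha)"

lemma cell_iso_cell_map:
  assumes l: "l \<in> Lam"
  shows "cell_iso sc i (cell_rank l) (cell_rep l) (N (gt l)) (N (ge l)) (cell_map l)"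
proof -
  have "\<exists>alpha. cell_iso sc i (cell_rank l) (cell_rep l) (N (gt l)) (N (ge l)) alpha"
    by (rule exists_cell_iso[OF l ord_ideal_gt ord_ideal_ge gt_subset_ge ge_Diff_gt[OF l]])
  then show ?thesis unfolding cell_map_def by (rule someI_ex)
qed

definition cell_lift :: "'l \<Rightarrow> nat \<times> nat \<Rightarrow> 'a" where
  "cell_lift l = (SOME d. \<forall>k. d k \<in> N (ge l) \<and> cell_map l (d k) = mat_unit (cell_rank l) k)"

lemma cell_lift:
  assumes "l \<in> Lam"
  shows "cell_lift l k \<in> N (ge l)" "cell_map l (cell_lift l k) = mat_unit (cell_rank l) k"
proof -
  obtain d where "\<And>k. d k \<in> N (ge l)" "\<And>k. cell_map l (d k) = mat_unit (cell_rank l) k"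
    using cell_iso_lift_units[OF cell_iso_cell_map[OF assms] N_subspace[OF ord_ideal_ge]] by blast
  then have "\<exists>d. \<forall>k. d k \<in> N (ge l) \<and> cell_map l (d k) = mat_unit (cell_rank l) k" by blast
  from someI_ex[OF this] show "cell_lift l k \<in> N (ge l)" "cell_map l (cell_lift l k) = mat_unit (cell_rank l) k"
    unfolding cell_lift_def by blast+
qed

definition cell_index :: "'l \<Rightarrow> nat set" where
  "cell_index l = {0..<cell_rank l}"

definition cell_elt :: "'l \<Rightarrow> nat \<Rightarrow> nat \<Rightarrow> 'a" where
  "cell_elt l s t = cell_lift l (s, t)"

definition cell_elts :: "'l set \<Rightarrow> 'a set" where
  "cell_elts G = {cell_elt m u v | m u v. m \<in> G \<and> u \<in> cell_index m \<and> v \<in> cell_index m}"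

definition cell_triples :: "'l set \<Rightarrow> ('l \<times> nat \<times> nat) set" where
  "cell_triples G = {(l, s, t). l \<in> G \<and> s \<in> cell_index l \<and> t \<in> cell_index l}"

lemma cell_elts_mono: "G1 \<subseteq> G2 \<Longrightarrow> cell_elts G1 \<subseteq> cell_elts G2"
  unfolding cell_elts_def by blast

lemma cell_elts_eq_image: "cell_elts G = (\<lambda>(l, s, t). cell_elt l s t) ` cell_triples G"
proof
  show "cell_elts G \<subseteq> (\<lambda>(l, s, t). cell_elt l s t) ` cell_triples G"
    unfolding cell_elts_def cell_triples_def by (auto intro!: image_eqI[where x="(_, _, _)"])
qed (auto simp: cell_elts_def cell_triples_def)

lemma cell_upper_eq_span: "cell_upper sc Lam Le cell_index cell_elt l = span (cell_elts (gt l))"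
  unfolding cell_upper_def cell_elts_def ideal_gt_def by simp

lemma finite_cell_triples: "G \<subseteq> Lam \<Longrightarrow> finite (cell_triples G)"
proof -
  assume "G \<subseteq> Lam"
  then have "cell_triples G \<subseteq> Sigma Lam (\<lambda>l. cell_index l \<times> cell_index l)"
    by (auto simp: cell_triples_def)
  moreover have "finite (Sigma Lam (\<lambda>l. cell_index l \<times> cell_index l))"
    using finite_Lam by (auto simp: cell_index_def)
  ultimately show ?thesis by (rule finite_subset)
qed

lemma cell_lift_in_cell_elts:
  assumes "l \<in> Lam" "k \<in> mat_index (cell_rank l)"
  shows "cell_lift l k \<in> cell_elts (ge l)"
proof -
  obtain s t where k: "k = (s, t)" "s < cell_rank l" "t < cell_rank l"
    using assms(2) by (cases k) auto
  then have "cell_lift l k = cell_elt l s t" by (simp add: cell_elt_def)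
  moreover have "cell_elt l s t \<in> cell_elts (ge l)"
    unfolding cell_elts_def cell_index_def using k self_in_ge[OF assms(1)]
    by (intro CollectI exI[of _ l] exI[of _ s] exI[of _ t]) auto
  ultimately show ?thesis by simp
qed

lemma N_gt_subset_span:
  assumes "l \<in> Lam" and "\<And>m. m \<in> gt l \<Longrightarrow> N (ge m) \<subseteq> span (cell_elts (ge m))"
  shows "N (gt l) \<subseteq> span (cell_elts (gt l))"
proof -
  have "N (ge m) \<subseteq> span (cell_elts (gt l))" if "m \<in> gt l" for m
    using assms(2)[OF that] span_mono[OF cell_elts_mono[OF ge_subset_gt[OF that]]] by blast
  then show ?thesis unfolding N_gt[OF assms(1)] by (intro span_minimal) auto
qed

lemma N_ge_subset_span: "l \<in> Lam \<Longrightarrow> N (ge l) \<subseteq> span (cell_elts (ge l))"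
proof (induct "card (gt l)" arbitrary: l rule: less_induct)
  case less
  note l = less(2)
  have "N (ge m) \<subseteq> span (cell_elts (ge m))" if m: "m \<in> gt l" for m
  proof (rule less(1))
    show "card (gt m) < card (gt l)"
      using gt_psubset_gt[OF m] finite_Lam by (intro psubset_card_mono) (simp_all add: ideal_gt_def)
    show "m \<in> Lam" using m by (simp add: ideal_gt_def)
  qed
  then have "N (gt l) \<subseteq> span (cell_elts (gt l))" by (rule N_gt_subset_span[OF l])
  then have N_gt: "N (gt l) \<subseteq> span (cell_elts (ge l))"
    using span_mono[OF cell_elts_mono[OF gt_subset_ge]] by blast
  show ?case
  proof
    fix x assume x: "x \<in> N (ge l)"
    let ?y = "\<Sum>k\<in>mat_index (cell_rank l). sc (cell_map l x $$ k) (cell_lift l k)"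
    have "x - ?y \<in> span (cell_elts (ge l))"
      using cell_iso_decompose[OF cell_iso_cell_map[OF l] N_subspace[OF ord_ideal_ge] cell_lift[OF l] x] N_gt
      by blast
    moreover have "?y \<in> span (cell_elts (ge l))"
      by (intro span_sum span_scale span_base cell_lift_in_cell_elts[OF l])
    ultimately have "(x - ?y) + ?y \<in> span (cell_elts (ge l))" by (rule span_add)
    then show "x \<in> span (cell_elts (ge l))" by simp
  qed
qed

lemma N_gt_subset_cell_upper: "l \<in> Lam \<Longrightarrow> N (gt l) \<subseteq> cell_upper sc Lam Le cell_index cell_elt l"
  unfolding cell_upper_eq_span using N_gt_subset_span N_ge_subset_span by (auto simp: ideal_gt_def)

lemma cell_elt_mult_left:
  assumes l: "l \<in> Lam" and s: "s \<in> cell_index l" and t: "t \<in> cell_index l"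
  shows "a * cell_elt l s t - (\<Sum>v\<in>cell_index l. sc (cell_rep l a $$ (v, s)) (cell_elt l v t))
    \<in> cell_upper sc Lam Le cell_index cell_elt l"
proof -
  let ?n = "cell_rank l" and ?R = "cell_rep l a"
  let ?K = "(\<lambda>v. (v, t)) ` {0..<?n}"
  note iso = cell_iso_cell_map[OF l] and sub = N_subspace[OF ord_ideal_ge]
  have x: "a * cell_elt l s t \<in> N (ge l)"
    unfolding cell_elt_def by (rule N_mult_left[OF ord_ideal_ge cell_lift(1)[OF l]])
  have y_eq: "(\<Sum>v\<in>cell_index l. sc (?R $$ (v, s)) (cell_elt l v t))
      = (\<Sum>k\<in>?K. sc (?R $$ (fst k, s)) (cell_lift l k))"
    by (simp add: sum.reindex inj_on_def cell_index_def cell_elt_def)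
  have y: "(\<Sum>k\<in>?K. sc (?R $$ (fst k, s)) (cell_lift l k)) \<in> N (ge l)"
    using cell_lift[OF l] sub by (auto intro!: subspace_sum subspace_scale)
  have "cell_map l (a * cell_elt l s t) = ?R * mat_unit ?n (s, t)"
    using cell_iso_mult_left[OF iso sub cell_lift(1)[OF l]] cell_lift(2)[OF l] by (simp add: cell_elt_def)
  also have "\<dots> = mat ?n ?n (\<lambda>k. if k \<in> ?K then ?R $$ (fst k, s) else 0)"
    using s t cell_rep_carrier[OF l]
    by (intro eq_matI) (auto simp: mat_mult_mat_unit_index cell_index_def)
  also have "\<dots> = cell_map l (\<Sum>k\<in>?K. sc (?R $$ (fst k, s)) (cell_lift l k))"
    using t by (intro cell_iso_sum_lifts[OF iso sub cell_lift[OF l], symmetric]) (auto simp: cell_index_def)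
  finally have "a * cell_elt l s t - (\<Sum>k\<in>?K. sc (?R $$ (fst k, s)) (cell_lift l k)) \<in> N (gt l)"
    by (rule cell_iso_diff_mem[OF iso sub x y])
  then show ?thesis using N_gt_subset_cell_upper[OF l] by (auto simp: y_eq)
qed

lemma cell_elt_involution:
  assumes l: "l \<in> Lam"
  shows "i (cell_elt l s t) - cell_elt l t s \<in> cell_upper sc Lam Le cell_index cell_elt l"
proof -
  note iso = cell_iso_cell_map[OF l] and sub = N_subspace[OF ord_ideal_ge]
  have x: "i (cell_elt l s t) \<in> N (ge l)" and y: "cell_elt l t s \<in> N (ge l)"
    using N_involution[OF ord_ideal_ge] cell_lift(1)[OF l] by (simp_all add: cell_elt_def)
  have "cell_map l (i (cell_elt l s t)) = transpose_mat (mat_unit (cell_rank l) (s, t))"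
    using cell_iso_involution[OF iso sub cell_lift(1)[OF l]] cell_lift(2)[OF l] by (simp add: cell_elt_def)
  also have "\<dots> = cell_map l (cell_elt l t s)"
    unfolding cell_elt_def cell_lift(2)[OF l] by (rule eq_matI) (auto simp: mat_unit_def)
  finally have "i (cell_elt l s t) - cell_elt l t s \<in> N (gt l)"
    by (rule cell_iso_diff_mem[OF iso sub x y])
  then show ?thesis using N_gt_subset_cell_upper[OF l] by blast
qed

lemma cell_triples_Diff_minimal:
  assumes "minimal_in G l"
  shows "cell_triples G = cell_triples (G - {l}) \<union> Pair l ` mat_index (cell_rank l)"
    and "cell_triples (G - {l}) \<inter> Pair l ` mat_index (cell_rank l) = {}"
  using assms by (auto simp: cell_triples_def cell_index_def mat_index_def minimal_in_def)

text \<open>A basis of \<open>A\<^sub>\<Gamma>\<^sub>-\<^sub>{\<^sub>l\<^sub>}\<close> is completed by preimages of the matrix units of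
  \<open>A\<^sub>\<Gamma> / A\<^sub>\<Gamma>\<^sub>-\<^sub>{\<^sub>l\<^sub>} \<cong> M(n, R)\<close>.\<close>
lemma N_basis_extend:
  assumes G: "ord_ideal G" and l: "minimal_in G l"
    and b0: "independent_family sc b0 (cell_triples (G - {l}))"
    and span_b0: "span (b0 ` cell_triples (G - {l})) = N (G - {l})"
  obtains b where "independent_family sc b (cell_triples G)" "span (b ` cell_triples G) = N G"
proof -
  let ?G0 = "G - {l}" and ?n = "cell_rank l"
  let ?I0 = "cell_triples ?G0" and ?I1 = "Pair l ` mat_index ?n"
  have G0: "ord_ideal ?G0" by (rule ord_ideal_Diff_minimal[OF G l])
  have lL: "l \<in> Lam" by (rule minimal_in_Lam[OF G l])
  obtain alpha where iso: "cell_iso sc i ?n (cell_rep l) (N ?G0) (N G) alpha"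
    using exists_cell_iso[OF lL G0 G] l unfolding minimal_in_def by blast
  note sub = N_subspace[OF G]
  obtain d where d: "\<And>k. d k \<in> N G" "\<And>k. alpha (d k) = mat_unit ?n k"
    using cell_iso_lift_units[OF iso sub] by blast
  define b where "b j = (if fst j = l then d (snd j) else b0 j)" for j
  note triples = cell_triples_Diff_minimal[OF l]
  have b_I0: "b j = b0 j" if "j \<in> ?I0" for j
    using that by (auto simp: b_def cell_triples_def)
  have "b ` ?I0 = b0 ` ?I0" by (rule image_cong[OF refl b_I0])
  then have span_I0: "span (b ` ?I0) = N ?G0" using span_b0 by simp
  have fin: "finite ?I0" "finite ?I1"
    using finite_cell_triples ord_ideal_subset[OF G0] by auto
  have "independent_family sc b (?I0 \<union> ?I1)"
  proof (rule independent_family_Un[OF fin triples(2)])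
    show "independent_family sc b ?I0"
      using b0 independent_family_cong[of ?I0 b b0, OF b_I0] by simp
    fix g assume in_span: "(\<Sum>j\<in>?I1. sc (g j) (b j)) \<in> span (b ` ?I0)"
    have "(\<Sum>j\<in>?I1. sc (g j) (b j)) = (\<Sum>k\<in>mat_index ?n. sc (g (l, k)) (d k))"
      by (simp add: sum.reindex inj_on_def b_def)
    then have sum_in: "(\<Sum>k\<in>mat_index ?n. sc (g (l, k)) (d k)) \<in> N ?G0"
      using in_span span_I0 by simp
    have "g (l, k) = 0" if "k \<in> mat_index ?n" for k
      using cell_iso_lifts_independent[OF iso sub d sum_in that] by simp
    then show "\<forall>j\<in>?I1. g j = 0" by simp
  qed
  moreover have "b ` ?I1 = d ` mat_index ?n"
  proof -
    have "b (l, k) = d k" for k by (simp add: b_def)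
    then show ?thesis by (simp add: image_image)
  qed
  then have "span (b ` (?I0 \<union> ?I1)) = N G"
    using cell_iso_span_lifts[OF iso sub d span_I0 N_mono[OF G0 G Diff_subset]] by (simp add: image_Un)
  ultimately show thesis using that triples(1) by simp
qed

lemma exists_N_basis:
  "ord_ideal G \<Longrightarrow> \<exists>b. independent_family sc b (cell_triples G) \<and> span (b ` cell_triples G) = N G"
proof (induct "card G" arbitrary: G rule: less_induct)
  case less
  show ?case
  proof (cases "G = {}")
    case True
    then have "cell_triples G = {}" unfolding cell_triples_def by auto
    then show ?thesis using True N_empty independent_family_empty by auto
  next
    case False
    obtain l where l: "minimal_in G l"
      using exists_minimal_in[OF ord_ideal_subset[OF less(2)] False] .
    have "finite G" using ord_ideal_subset[OF less(2)] finite_Lam finite_subset by blast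
    then have "card (G - {l}) < card G" using l by (intro card_Diff1_less) (auto simp: minimal_in_def)
    then obtain b0 where b0: "independent_family sc b0 (cell_triples (G - {l}))"
      "span (b0 ` cell_triples (G - {l})) = N (G - {l})"
      using less(1) ord_ideal_Diff_minimal[OF less(2) l] by blast
    show ?thesis using N_basis_extend[OF less(2) l b0] by blast
  qed
qed

lemma is_cell_datum_net: "is_cell_datum sc i Lam Le cell_index cell_elt"
proof -
  let ?c = "\<lambda>(l, s, t). cell_elt l s t" and ?I = "cell_triples Lam"
  have fin: "finite ?I" by (rule finite_cell_triples) simp
  have span_c: "span (?c ` ?I) = UNIV"
  proof -
    have "N (ge m) \<subseteq> span (cell_elts Lam)" if "m \<in> Lam" for m
      using N_ge_subset_span[OF that] span_mono[OF cell_elts_mono[of "ge m" Lam]]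
      by (auto simp: ideal_ge_def)
    then have "span (\<Union>m\<in>Lam. N (ge m)) \<subseteq> span (cell_elts Lam)"
      by (intro span_minimal) auto
    then show ?thesis using span_N_ge cell_elts_eq_image by auto
  qed
  obtain b where "independent_family sc b ?I" "span (b ` ?I) = N Lam"
    using exists_N_basis[OF ord_ideal_Lam] by blast
  then have indep: "independent_family sc ?c ?I"
    using spanning_family_independent[OF fin] span_c N_Lam by blast
  have c_eq: "{cell_elt l s t | l s t. l \<in> Lam \<and> s \<in> cell_index l \<and> t \<in> cell_index l} = ?c ` ?I"
    using cell_elts_eq_image unfolding cell_elts_def .
  show ?thesis
    unfolding is_cell_datum_def
  proof (intro conjI ballI allI)
    show "inj_on ?c {(l, s, t). l \<in> Lam \<and> s \<in> cell_index l \<and> t \<in> cell_index l}"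
      using independent_family_inj_on[OF fin indep] by (simp add: cell_triples_def)
    show "\<exists>rr. \<forall>t\<in>cell_index l. a * cell_elt l s t - (\<Sum>v\<in>cell_index l. sc (rr v) (cell_elt l v t))
        \<in> cell_upper sc Lam Le cell_index cell_elt l"
      if "l \<in> Lam" "s \<in> cell_index l" for l s a
      by (intro exI[of _ "\<lambda>v. cell_rep l a $$ (v, s)"] ballI cell_elt_mult_left[OF that])
  qed (use independent_family_independent[OF fin indep] span_c c_eq cell_elt_involution
       in \<open>simp_all add: cell_index_def\<close>)
qed

end

section \<open>A cell datum yields a cell net\<close>

locale cell_datum_algebra = involutive_algebra sc i + finite_poset Lam Le
  for sc :: "'r::comm_ring_1 \<Rightarrow> 'a::ring_1 \<Rightarrow> 'a" and i and Lam :: "'l set" and Le +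
  fixes T :: "'l \<Rightarrow> nat set" and c :: "'l \<Rightarrow> nat \<Rightarrow> nat \<Rightarrow> 'a"
  assumes cell_datum: "is_cell_datum sc i Lam Le T c"
begin

lemma inj_on_c: "inj_on (\<lambda>(l, s, t). c l s t) {(l, s, t). l \<in> Lam \<and> s \<in> T l \<and> t \<in> T l}"
  using cell_datum unfolding is_cell_datum_def by (elim conjE) assumption

lemma independent_c: "independent {c l s t | l s t. l \<in> Lam \<and> s \<in> T l \<and> t \<in> T l}"
  using cell_datum unfolding is_cell_datum_def by (elim conjE) assumption

lemma span_c: "span {c l s t | l s t. l \<in> Lam \<and> s \<in> T l \<and> t \<in> T l} = UNIV"
  using cell_datum unfolding is_cell_datum_def by (elim conjE) assumption

lemma finite_T: "l \<in> Lam \<Longrightarrow> finite (T l)"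
  using cell_datum unfolding is_cell_datum_def by (elim conjE) blast

lemma datum_mult_left:
  "l \<in> Lam \<Longrightarrow> s \<in> T l \<Longrightarrow> \<exists>rr. \<forall>t\<in>T l. a * c l s t - (\<Sum>v\<in>T l. sc (rr v) (c l v t)) \<in> cell_upper sc Lam Le T c l"
  using cell_datum unfolding is_cell_datum_def by (elim conjE) blast

lemma datum_involution:
  "l \<in> Lam \<Longrightarrow> s \<in> T l \<Longrightarrow> t \<in> T l \<Longrightarrow> i (c l s t) - c l t s \<in> cell_upper sc Lam Le T c l"
  using cell_datum unfolding is_cell_datum_def by (elim conjE) blast

definition triples :: "('l \<times> nat \<times> nat) set" where
  "triples = {(l, s, t). l \<in> Lam \<and> s \<in> T l \<and> t \<in> T l}"

definition basis_elt :: "'l \<times> nat \<times> nat \<Rightarrow> 'a" where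
  "basis_elt = (\<lambda>(l, s, t). c l s t)"

lemma basis_elt_simp [simp]: "basis_elt (l, s, t) = c l s t"
  by (simp add: basis_elt_def)

lemma triples_iff [simp]: "(l, s, t) \<in> triples \<longleftrightarrow> l \<in> Lam \<and> s \<in> T l \<and> t \<in> T l"
  by (simp add: triples_def)

lemma finite_triples: "finite triples"
proof -
  have "triples \<subseteq> Sigma Lam (\<lambda>l. T l \<times> T l)" by (auto simp: triples_def)
  moreover have "finite (Sigma Lam (\<lambda>l. T l \<times> T l))" using finite_Lam finite_T by auto
  ultimately show ?thesis by (rule finite_subset)
qed

lemma c_image_eq:
  "{c l s t | l s t. l \<in> G \<and> l \<in> Lam \<and> s \<in> T l \<and> t \<in> T l} = basis_elt ` {j \<in> triples. fst j \<in> G}"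
proof
  show "{c l s t | l s t. l \<in> G \<and> l \<in> Lam \<and> s \<in> T l \<and> t \<in> T l} \<subseteq> basis_elt ` {j \<in> triples. fst j \<in> G}"
    by (auto intro!: image_eqI[where x="(_, _, _)"])
  show "basis_elt ` {j \<in> triples. fst j \<in> G} \<subseteq> {c l s t | l s t. l \<in> G \<and> l \<in> Lam \<and> s \<in> T l \<and> t \<in> T l}"
    by (fastforce simp: triples_def)
qed

lemma triples_Lam: "{j \<in> triples. fst j \<in> Lam} = triples"
  by (auto simp: triples_def)

lemma c_image_triples: "{c l s t | l s t. l \<in> Lam \<and> s \<in> T l \<and> t \<in> T l} = basis_elt ` triples"
  using c_image_eq[of Lam] by (simp add: triples_Lam)

lemma independent_family_basis_elt: "independent_family sc basis_elt triples"
proof (rule independent_familyI[OF finite_triples])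
  show "inj_on basis_elt triples"
    using inj_on_c unfolding basis_elt_def triples_def .
  show "independent (basis_elt ` triples)"
    using independent_c unfolding c_image_triples .
qed

lemma span_basis_elt: "span (basis_elt ` triples) = UNIV"
  using span_c unfolding c_image_triples .

definition coord :: "'a \<Rightarrow> 'l \<times> nat \<times> nat \<Rightarrow> 'r" where
  "coord x = (SOME g. x = (\<Sum>j\<in>triples. sc (g j) (basis_elt j)))"

lemma coord_expansion: "x = (\<Sum>j\<in>triples. sc (coord x j) (basis_elt j))"
proof -
  have "\<exists>g. x = (\<Sum>j\<in>triples. sc (g j) (basis_elt j))"
    using span_basis_elt span_image_eq_range_sum[OF finite_triples, of basis_elt] by auto
  from someI_ex[OF this] show ?thesis unfolding coord_def .
qed

lemma coord_unique: "x = (\<Sum>j\<in>triples. sc (g j) (basis_elt j)) \<Longrightarrow> j \<in> triples \<Longrightarrow> coord x j = g j"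
  using independent_family_coeffs_eq[OF independent_family_basis_elt, of "coord x" g j]
    coord_expansion[of x] by simp

lemma coord_add: "j \<in> triples \<Longrightarrow> coord (x + y) j = coord x j + coord y j"
proof -
  assume j: "j \<in> triples"
  have "x + y = (\<Sum>j\<in>triples. sc (coord x j) (basis_elt j)) + (\<Sum>j\<in>triples. sc (coord y j) (basis_elt j))"
    using coord_expansion[of x] coord_expansion[of y] by simp
  also have "\<dots> = (\<Sum>j\<in>triples. sc (coord x j + coord y j) (basis_elt j))"
    by (simp add: sum.distrib scale_left_distrib)
  finally show ?thesis by (rule coord_unique[OF _ j])
qed

lemma coord_scale: "j \<in> triples \<Longrightarrow> coord (sc r x) j = r * coord x j"
proof -
  assume j: "j \<in> triples"
  have "sc r x = sc r (\<Sum>j\<in>triples. sc (coord x j) (basis_elt j))" using coord_expansion[of x] by simp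
  also have "\<dots> = (\<Sum>j\<in>triples. sc (r * coord x j) (basis_elt j))"
    by (simp add: scale_sum_right)
  finally show ?thesis by (rule coord_unique[OF _ j])
qed

lemma coord_zero: "j \<in> triples \<Longrightarrow> coord 0 j = 0"
  using coord_scale[of j 0 0] by simp

lemma coord_sum:
  assumes "j \<in> triples" "finite K"
  shows "coord (\<Sum>k\<in>K. f k) j = (\<Sum>k\<in>K. coord (f k) j)"
  using assms(2) by (induct K rule: finite_induct) (simp_all add: coord_zero coord_add assms(1))

lemma coord_basis_elt:
  assumes k: "k \<in> triples" and j: "j \<in> triples"
  shows "coord (basis_elt k) j = (if j = k then 1 else 0)"
proof (rule coord_unique[OF _ j])
  have "(\<Sum>j\<in>triples. sc (if j = k then 1 else 0) (basis_elt j)) = (\<Sum>j\<in>triples. if j = k then basis_elt j else 0)"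
    by (rule sum.cong) auto
  also have "\<dots> = basis_elt k" using k finite_triples by simp
  finally show "basis_elt k = (\<Sum>j\<in>triples. sc (if j = k then 1 else 0) (basis_elt j))" by simp
qed

lemma coord_c: "(l, u, w) \<in> triples \<Longrightarrow> j \<in> triples \<Longrightarrow> coord (c l u w) j = (if j = (l, u, w) then 1 else 0)"
  using coord_basis_elt[of "(l, u, w)" j] by simp

definition cell_ideal :: "'l set \<Rightarrow> 'a set" where
  "cell_ideal G = span (basis_elt ` {j \<in> triples. fst j \<in> G})"

lemma subspace_cell_ideal: "subspace (cell_ideal G)"
  unfolding cell_ideal_def by simp

lemma cell_ideal_Lam: "cell_ideal Lam = UNIV"
  by (simp add: cell_ideal_def triples_Lam span_basis_elt)

lemma cell_ideal_mono: "G1 \<subseteq> G2 \<Longrightarrow> cell_ideal G1 \<subseteq> cell_ideal G2"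
  unfolding cell_ideal_def by (rule span_mono) blast

lemma basis_elt_in_cell_ideal: "j \<in> triples \<Longrightarrow> fst j \<in> G \<Longrightarrow> basis_elt j \<in> cell_ideal G"
  unfolding cell_ideal_def by (rule span_base) blast

lemma c_in_cell_ideal: "l \<in> G \<Longrightarrow> l \<in> Lam \<Longrightarrow> s \<in> T l \<Longrightarrow> t \<in> T l \<Longrightarrow> c l s t \<in> cell_ideal G"
  using basis_elt_in_cell_ideal[of "(l, s, t)" G] by simp

lemma cell_ideal_iff_coord: "x \<in> cell_ideal G \<longleftrightarrow> (\<forall>j\<in>triples. fst j \<notin> G \<longrightarrow> coord x j = 0)"
proof -
  let ?IG = "{j \<in> triples. fst j \<in> G}"
  have fin: "finite ?IG" using finite_triples by simp
  have restrict: "(\<Sum>j\<in>triples. sc (if fst j \<in> G then g j else 0) (basis_elt j))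
      = (\<Sum>j\<in>?IG. sc (g j) (basis_elt j))" for g
  proof -
    have "(\<Sum>j\<in>triples. sc (if fst j \<in> G then g j else 0) (basis_elt j))
        = (\<Sum>j\<in>triples. if j \<in> ?IG then sc (g j) (basis_elt j) else 0)"
      by (rule sum.cong) auto
    also have "\<dots> = (\<Sum>j\<in>?IG. sc (g j) (basis_elt j))"
      using finite_triples by (simp add: sum.If_cases Int_def)
    finally show ?thesis .
  qed
  show ?thesis
  proof
    assume "x \<in> cell_ideal G"
    then obtain g where "x = (\<Sum>j\<in>?IG. sc (g j) (basis_elt j))"
      unfolding cell_ideal_def span_image_eq_range_sum[OF fin] by blast
    then have x_eq: "x = (\<Sum>j\<in>triples. sc (if fst j \<in> G then g j else 0) (basis_elt j))"
      by (simp only: restrict)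
    have "coord x j = (if fst j \<in> G then g j else 0)" if "j \<in> triples" for j
      using coord_unique[of x "\<lambda>j. if fst j \<in> G then g j else 0" j] x_eq that by simp
    then show "\<forall>j\<in>triples. fst j \<notin> G \<longrightarrow> coord x j = 0" by simp
  next
    assume zero: "\<forall>j\<in>triples. fst j \<notin> G \<longrightarrow> coord x j = 0"
    have "(\<Sum>j\<in>triples. sc (if fst j \<in> G then coord x j else 0) (basis_elt j))
        = (\<Sum>j\<in>triples. sc (coord x j) (basis_elt j))"
      using zero by (intro sum.cong) auto
    then have "x = (\<Sum>j\<in>triples. sc (if fst j \<in> G then coord x j else 0) (basis_elt j))"
      using coord_expansion[of x] by simp
    then have "x = (\<Sum>j\<in>?IG. sc (coord x j) (basis_elt j))" by (simp only: restrict)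
    then show "x \<in> cell_ideal G"
      unfolding cell_ideal_def span_image_eq_range_sum[OF fin] by blast
  qed
qed

lemma coord_notin_cell_ideal: "x \<in> cell_ideal G \<Longrightarrow> l \<notin> G \<Longrightarrow> (l, v, t) \<in> triples \<Longrightarrow> coord x (l, v, t) = 0"
  using cell_ideal_iff_coord by fastforce

lemma cell_ideal_induct [consumes 1, case_names subspace generator]:
  assumes "x \<in> cell_ideal G" "subspace {x. P x}"
    and gen: "\<And>l s t. l \<in> G \<Longrightarrow> l \<in> Lam \<Longrightarrow> s \<in> T l \<Longrightarrow> t \<in> T l \<Longrightarrow> P (c l s t)"
  shows "P x"
proof -
  have "basis_elt j \<in> {x. P x}" if "j \<in> triples" "fst j \<in> G" for j
    using that gen by (cases j) simp
  then have "cell_ideal G \<subseteq> {x. P x}"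
    unfolding cell_ideal_def by (intro span_minimal[OF _ assms(2)]) blast
  then show ?thesis using assms(1) by blast
qed

lemma cell_upper_eq_cell_ideal: "cell_upper sc Lam Le T c l = cell_ideal (gt l)"
proof -
  have "{c m u v | m u v. m \<in> Lam \<and> strictly_above Le m l \<and> u \<in> T m \<and> v \<in> T m} =
        {c m u v | m u v. m \<in> gt l \<and> m \<in> Lam \<and> u \<in> T m \<and> v \<in> T m}"
    unfolding ideal_gt_def by blast
  then show ?thesis unfolding cell_upper_def cell_ideal_def c_image_eq by simp
qed

lemma cell_ideal_upper_mem:
  assumes "ord_ideal G" "l \<in> G" "x - y \<in> cell_upper sc Lam Le T c l" "y \<in> cell_ideal G"
  shows "x \<in> cell_ideal G"
proof -
  have "gt l \<subseteq> G" using gt_subset_ge ge_subset[OF assms(1,2)] by blast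
  then have "x - y \<in> cell_ideal G"
    using assms(3) cell_ideal_mono unfolding cell_upper_eq_cell_ideal by blast
  then have "(x - y) + y \<in> cell_ideal G" using assms(4) subspace_add[OF subspace_cell_ideal] by blast
  then show ?thesis by simp
qed

lemma cell_ideal_mult_left:
  assumes G: "ord_ideal G" and x: "x \<in> cell_ideal G"
  shows "a * x \<in> cell_ideal G"
  using x
proof (induct rule: cell_ideal_induct)
  case subspace
  show ?case
    by (rule subspaceI)
      (auto simp: distrib_left scale_mult_right[symmetric] intro: subspace_0[OF subspace_cell_ideal]
        subspace_add[OF subspace_cell_ideal] subspace_scale[OF subspace_cell_ideal])
next
  case (generator l s t)
  obtain rr where "a * c l s t - (\<Sum>v\<in>T l. sc (rr v) (c l v t)) \<in> cell_upper sc Lam Le T c l"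
    using datum_mult_left[OF generator(2,3)] generator(4) by blast
  moreover have "(\<Sum>v\<in>T l. sc (rr v) (c l v t)) \<in> cell_ideal G"
    using generator by (intro subspace_sum[OF subspace_cell_ideal] subspace_scale[OF subspace_cell_ideal]
        c_in_cell_ideal) auto
  ultimately show ?case using cell_ideal_upper_mem[OF G generator(1)] by blast
qed

lemma cell_ideal_involution:
  assumes G: "ord_ideal G" and x: "x \<in> cell_ideal G"
  shows "i x \<in> cell_ideal G"
  using x
proof (induct rule: cell_ideal_induct)
  case subspace
  show ?case
    by (rule subspaceI)
      (auto simp: i_add i_scale intro: subspace_0[OF subspace_cell_ideal]
        subspace_add[OF subspace_cell_ideal] subspace_scale[OF subspace_cell_ideal])
next
  case (generator l s t)
  then show ?case
    using datum_involution cell_ideal_upper_mem[OF G] c_in_cell_ideal by blast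
qed

lemma cell_ideal_mult_right:
  assumes "ord_ideal G" "x \<in> cell_ideal G"
  shows "x * a \<in> cell_ideal G"
proof -
  have "i (i a * i x) \<in> cell_ideal G"
    using assms by (intro cell_ideal_involution cell_ideal_mult_left)
  then show ?thesis by (simp add: i_mult i_i)
qed

lemma two_sided_ideal_cell_ideal: "ord_ideal G \<Longrightarrow> two_sided_ideal (cell_ideal G)"
  unfolding two_sided_ideal_def
  using subspace_0[OF subspace_cell_ideal] subspace_add[OF subspace_cell_ideal]
    cell_ideal_mult_left cell_ideal_mult_right by blast

lemma cell_ideal_empty: "cell_ideal {} = {0}"
  unfolding cell_ideal_def by simp

lemma cell_ideal_ge_generate:
  assumes "ord_ideal G"
  shows "cell_ideal G = span (\<Union>m\<in>G. cell_ideal (ge m))"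
proof
  show "cell_ideal G \<subseteq> span (\<Union>m\<in>G. cell_ideal (ge m))"
    unfolding cell_ideal_def[of G]
  proof (rule span_minimal[OF _ subspace_span], safe)
    fix l s t assume "(l, s, t) \<in> triples" "fst (l, s, t) \<in> G"
    then have "basis_elt (l, s, t) \<in> cell_ideal (ge l)"
      by (intro basis_elt_in_cell_ideal) (auto simp: self_in_ge)
    then show "basis_elt (l, s, t) \<in> span (\<Union>m\<in>G. cell_ideal (ge m))"
      using \<open>fst (l, s, t) \<in> G\<close> by (intro span_base) auto
  qed
  show "span (\<Union>m\<in>G. cell_ideal (ge m)) \<subseteq> cell_ideal G"
    using cell_ideal_mono[OF ge_subset[OF assms]] by (intro span_minimal[OF _ subspace_cell_ideal]) blast
qed

definition deg :: "'l \<Rightarrow> nat" where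
  "deg l = card (T l)"

definition enum :: "'l \<Rightarrow> nat \<Rightarrow> nat" where
  "enum l = (SOME e. bij_betw e {0..<deg l} (T l))"

lemma enum_bij:
  assumes "l \<in> Lam"
  shows "bij_betw (enum l) {0..<deg l} (T l)"
proof -
  have "\<exists>e. bij_betw e {0..<deg l} (T l)"
    unfolding deg_def by (rule ex_bij_betw_nat_finite[OF finite_T[OF assms]])
  then show ?thesis unfolding enum_def by (rule someI_ex)
qed

lemma enum_in: "l \<in> Lam \<Longrightarrow> p < deg l \<Longrightarrow> enum l p \<in> T l"
  using enum_bij bij_betwE by fastforce

lemma enum_inj: "l \<in> Lam \<Longrightarrow> p < deg l \<Longrightarrow> q < deg l \<Longrightarrow> enum l p = enum l q \<longleftrightarrow> p = q"
  using enum_bij unfolding bij_betw_def inj_on_def by fastforce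

lemma enum_surj: "l \<in> Lam \<Longrightarrow> s \<in> T l \<Longrightarrow> \<exists>p<deg l. s = enum l p"
  using enum_bij unfolding bij_betw_def by fastforce

lemma enum_triples: "l \<in> Lam \<Longrightarrow> p < deg l \<Longrightarrow> q < deg l \<Longrightarrow> (l, enum l p, enum l q) \<in> triples"
  using enum_in by simp

text \<open>The cell module of \<open>l\<close> is \<open>R\<^sup>n\<close> with \<open>n = |T(l)|\<close>; \<open>block l\<close> reads off the \<open>l\<close>-block of coordinates,
  which is the isomorphism \<open>A\<^sub>\<Gamma>\<^sub>' / A\<^sub>\<Gamma> \<cong> M(n, R)\<close> of the net.\<close>
definition block :: "'l \<Rightarrow> 'a \<Rightarrow> 'r mat" where
  "block l x = mat (deg l) (deg l) (\<lambda>(p, q). coord x (l, enum l p, enum l q))"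

definition left_coeff :: "'l \<Rightarrow> 'a \<Rightarrow> nat \<Rightarrow> nat \<Rightarrow> 'r" where
  "left_coeff l a s = (SOME rr. \<forall>t\<in>T l. a * c l s t - (\<Sum>v\<in>T l. sc (rr v) (c l v t)) \<in> cell_upper sc Lam Le T c l)"

definition block_rep :: "'l \<Rightarrow> 'a \<Rightarrow> 'r mat" where
  "block_rep l a = mat (deg l) (deg l) (\<lambda>(v, s). left_coeff l a (enum l s) (enum l v))"

lemma block_carrier [simp]: "block l x \<in> carrier_mat (deg l) (deg l)"
  by (simp add: block_def)

lemma block_rep_carrier [simp]: "block_rep l a \<in> carrier_mat (deg l) (deg l)"
  by (simp add: block_rep_def)

lemma dim_block [simp]: "dim_row (block l x) = deg l" "dim_col (block l x) = deg l"
  by (simp_all add: block_def)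

lemma dim_block_rep [simp]: "dim_row (block_rep l a) = deg l" "dim_col (block_rep l a) = deg l"
  by (simp_all add: block_rep_def)

lemma block_index: "p < deg l \<Longrightarrow> q < deg l \<Longrightarrow> block l x $$ (p, q) = coord x (l, enum l p, enum l q)"
  by (simp add: block_def)

lemma block_zero: "l \<in> Lam \<Longrightarrow> block l 0 = 0\<^sub>m (deg l) (deg l)"
  by (rule eq_matI) (auto simp: block_def coord_zero enum_in)

lemma block_add: "l \<in> Lam \<Longrightarrow> block l (x + y) = block l x + block l y"
  by (rule eq_matI) (auto simp: block_def coord_add enum_in)

lemma block_scale: "l \<in> Lam \<Longrightarrow> block l (sc r x) = r \<cdot>\<^sub>m block l x"
  by (rule eq_matI) (auto simp: block_def coord_scale enum_in)

lemma block_c: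
  assumes "l \<in> Lam" "s < deg l" "t < deg l"
  shows "block l (c l (enum l s) (enum l t)) = mat_unit (deg l) (s, t)"
  using assms by (intro eq_matI) (auto simp: block_def mat_unit_def coord_c enum_in enum_inj)

lemma block_notin: "x \<in> cell_ideal G \<Longrightarrow> l \<notin> G \<Longrightarrow> l \<in> Lam \<Longrightarrow> block l x = 0\<^sub>m (deg l) (deg l)"
  by (intro eq_matI) (auto simp: block_def intro!: coord_notin_cell_ideal enum_triples)

lemma block_other_cell:
  assumes G: "ord_ideal G" and l: "minimal_in G l" and m: "m \<in> G" "m \<noteq> l" and x: "x \<in> cell_ideal (ge m)"
  shows "block l x = 0\<^sub>m (deg l) (deg l)"
  by (rule block_notin[OF x minimal_in_notin_ge[OF l m] minimal_in_Lam[OF G l]])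

lemma left_coeff:
  assumes l: "l \<in> Lam" and s: "s \<in> T l" and t: "t \<in> T l"
  shows "a * c l s t - (\<Sum>v\<in>T l. sc (left_coeff l a s v) (c l v t)) \<in> cell_ideal (gt l)"
proof -
  have "\<exists>rr. \<forall>t\<in>T l. a * c l s t - (\<Sum>v\<in>T l. sc (rr v) (c l v t)) \<in> cell_upper sc Lam Le T c l"
    by (rule datum_mult_left[OF l s])
  then have "\<forall>t\<in>T l. a * c l s t - (\<Sum>v\<in>T l. sc (left_coeff l a s v) (c l v t)) \<in> cell_upper sc Lam Le T c l"
    unfolding left_coeff_def by (rule someI_ex)
  then show ?thesis using t unfolding cell_upper_eq_cell_ideal by blast
qed

lemma coord_sum_c:
  assumes l: "l \<in> Lam" and v: "v \<in> T l" and t': "t' \<in> T l" and t: "t \<in> T l"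
  shows "coord (\<Sum>w\<in>T l. sc (f w) (c l w t)) (l, v, t') = (if t' = t then f v else 0)"
proof -
  have j: "(l, v, t') \<in> triples" using l v t' by simp
  have fin: "finite (T l)" using finite_T l by blast
  have "coord (\<Sum>w\<in>T l. sc (f w) (c l w t)) (l, v, t') = (\<Sum>w\<in>T l. f w * coord (c l w t) (l, v, t'))"
    by (simp add: coord_sum[OF j fin] coord_scale[OF j])
  also have "\<dots> = (\<Sum>w\<in>T l. if w = v then (if t' = t then f v else 0) else 0)"
    by (rule sum.cong[OF refl]) (use l t j in \<open>auto simp: coord_c\<close>)
  also have "\<dots> = (if t' = t then f v else 0)" using fin v by simp
  finally show ?thesis .
qed

text \<open>Modulo \<open>A\<^sub>>\<^sub>l\<close>, left multiplication only mixes the first index of \<open>c\<^sup>l\<^sub>s\<^sub>t\<close>.\<close>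
lemma coord_mult_left_c:
  assumes l: "l \<in> Lam" and s: "s \<in> T l" and t: "t \<in> T l" and v: "v \<in> T l" and t': "t' \<in> T l"
  shows "coord (a * c l s t) (l, v, t') = (if t' = t then left_coeff l a s v else 0)"
proof -
  let ?S = "\<Sum>w\<in>T l. sc (left_coeff l a s w) (c l w t)"
  have j: "(l, v, t') \<in> triples" using l v t' by simp
  have "coord (a * c l s t) (l, v, t') = coord (a * c l s t - ?S) (l, v, t') + coord ?S (l, v, t')"
    using coord_add[OF j, of "a * c l s t - ?S" ?S] by simp
  also have "coord (a * c l s t - ?S) (l, v, t') = 0"
    by (rule coord_notin_cell_ideal[OF left_coeff[OF l s t] self_notin_gt j])
  finally show ?thesis by (simp add: coord_sum_c[OF l v t' t])
qed

lemma coord_involution_c: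
  assumes l: "l \<in> Lam" and s: "s \<in> T l" and t: "t \<in> T l" and j: "(l, v, t') \<in> triples"
  shows "coord (i (c l s t)) (l, v, t') = coord (c l t s) (l, v, t')"
proof -
  have "i (c l s t) - c l t s \<in> cell_ideal (gt l)"
    using datum_involution[OF l s t] cell_upper_eq_cell_ideal by simp
  then have "coord (i (c l s t) - c l t s) (l, v, t') = 0"
    by (rule coord_notin_cell_ideal[OF _ self_notin_gt j])
  then show ?thesis using coord_add[OF j, of "i (c l s t) - c l t s" "c l t s"] by simp
qed

lemma block_mult_left_c:
  assumes l: "l \<in> Lam" and s: "s < deg l" and t: "t < deg l"
  shows "block l (a * c l (enum l s) (enum l t)) = block_rep l a * mat_unit (deg l) (s, t)"
proof (rule eq_matI)
  fix p q assume "p < dim_row (block_rep l a * mat_unit (deg l) (s, t))"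
    "q < dim_col (block_rep l a * mat_unit (deg l) (s, t))"
  then have pq: "p < deg l" "q < deg l" by auto
  have "block l (a * c l (enum l s) (enum l t)) $$ (p, q) = (if q = t then block_rep l a $$ (p, s) else 0)"
    using pq s t by (simp add: block_index coord_mult_left_c enum_in l enum_inj block_rep_def)
  then show "block l (a * c l (enum l s) (enum l t)) $$ (p, q) = (block_rep l a * mat_unit (deg l) (s, t)) $$ (p, q)"
    using mat_mult_mat_unit_index[OF block_rep_carrier pq s] by simp
qed auto

lemma block_involution_c:
  assumes l: "l \<in> Lam" and s: "s < deg l" and t: "t < deg l"
  shows "block l (i (c l (enum l s) (enum l t))) = transpose_mat (block l (c l (enum l s) (enum l t)))"
proof -
  have "block l (i (c l (enum l s) (enum l t))) = block l (c l (enum l t) (enum l s))"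
    using l s t by (intro eq_matI) (simp_all add: block_index coord_involution_c enum_in enum_triples)
  then show ?thesis using l s t by (simp add: block_c) (auto simp: mat_unit_def intro!: eq_matI)
qed

lemma block_mult_left:
  assumes G: "ord_ideal G" and l: "minimal_in G l" and x: "x \<in> cell_ideal G"
  shows "block l (a * x) = block_rep l a * block l x"
  using x
proof (induct rule: cell_ideal_induct)
  case subspace
  have lL: "l \<in> Lam" by (rule minimal_in_Lam[OF G l])
  let ?R = "block_rep l a"
  show ?case
  proof (rule subspaceI)
    show "0 \<in> {x. block l (a * x) = ?R * block l x}"
      using lL by (simp add: block_zero)
  next
    fix x y
    assume "x \<in> {x. block l (a * x) = ?R * block l x}" "y \<in> {x. block l (a * x) = ?R * block l x}"
    then show "x + y \<in> {x. block l (a * x) = ?R * block l x}"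
      using lL by (simp add: distrib_left block_add mult_add_distrib_mat[OF block_rep_carrier block_carrier block_carrier])
  next
    fix r x assume "x \<in> {x. block l (a * x) = ?R * block l x}"
    then show "sc r x \<in> {x. block l (a * x) = ?R * block l x}"
      using lL by (simp add: scale_mult_right[symmetric] block_scale mult_smult_distrib[OF block_rep_carrier block_carrier])
  qed
next
  case (generator m u w)
  show ?case
  proof (cases "m = l")
    case True
    obtain s t where "s < deg l" "u = enum l s" "t < deg l" "w = enum l t"
      using enum_surj generator True by metis
    then show ?thesis using True generator by (simp add: block_mult_left_c block_c)
  next
    case False
    have cm: "c m u w \<in> cell_ideal (ge m)"
      using generator self_in_ge by (intro c_in_cell_ideal) auto
    show ?thesis
      using block_other_cell[OF G l generator(1) False cm]
        block_other_cell[OF G l generator(1) False cell_ideal_mult_left[OF ord_ideal_ge cm]]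
      by simp
  qed
qed

lemma block_involution:
  assumes G: "ord_ideal G" and l: "minimal_in G l" and x: "x \<in> cell_ideal G"
  shows "block l (i x) = transpose_mat (block l x)"
  using x
proof (induct rule: cell_ideal_induct)
  case subspace
  have lL: "l \<in> Lam" by (rule minimal_in_Lam[OF G l])
  show ?case
  proof (rule subspaceI)
    show "0 \<in> {x. block l (i x) = transpose_mat (block l x)}"
      using lL by (simp add: block_zero)
  next
    fix x y
    assume "x \<in> {x. block l (i x) = transpose_mat (block l x)}" "y \<in> {x. block l (i x) = transpose_mat (block l x)}"
    then show "x + y \<in> {x. block l (i x) = transpose_mat (block l x)}"
      using lL by (simp add: i_add block_add transpose_add[of _ "deg l" "deg l"])
  next
    fix r x assume "x \<in> {x. block l (i x) = transpose_mat (block l x)}"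
    then show "sc r x \<in> {x. block l (i x) = transpose_mat (block l x)}"
      using lL by (simp add: i_scale block_scale) (auto intro!: eq_matI)
  qed
next
  case (generator m u w)
  show ?case
  proof (cases "m = l")
    case True
    obtain s t where "s < deg l" "u = enum l s" "t < deg l" "w = enum l t"
      using enum_surj generator True by metis
    then show ?thesis using True generator by (simp add: block_involution_c)
  next
    case False
    have cm: "c m u w \<in> cell_ideal (ge m)"
      using generator self_in_ge by (intro c_in_cell_ideal) auto
    show ?thesis
      using block_other_cell[OF G l generator(1) False cm]
        block_other_cell[OF G l generator(1) False cell_ideal_involution[OF ord_ideal_ge cm]]
      by (auto intro!: eq_matI)
  qed
qed

lemma block_mult_right:
  assumes G: "ord_ideal G" and l: "minimal_in G l" and x: "x \<in> cell_ideal G"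
  shows "block l (x * a) = block l x * transpose_mat (block_rep l (i a))"
proof -
  have ix: "i x \<in> cell_ideal G" by (rule cell_ideal_involution[OF G x])
  have "block l (x * a) = block l (i (i a * i x))" by (simp add: i_mult i_i)
  also have "\<dots> = transpose_mat (block_rep l (i a) * transpose_mat (block l x))"
    by (simp add: block_involution[OF G l] cell_ideal_mult_left[OF G ix] block_mult_left[OF G l ix]
        block_involution[OF G l x])
  also have "\<dots> = block l x * transpose_mat (block_rep l (i a))"
    by (subst transpose_mult[of _ "deg l" "deg l" _ "deg l"]) auto
  finally show ?thesis .
qed

lemma block_rep_mult_mat_unit:
  assumes l: "l \<in> Lam" and s: "s < deg l"
  shows "block_rep l a * mat_unit (deg l) (s, s) = block l (a * c l (enum l s) (enum l s))"
  using block_mult_left_c[OF l s s] by simp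

lemma left_module_rep_block_rep:
  assumes l: "l \<in> Lam"
  shows "left_module_rep sc (deg l) (block_rep l)"
  unfolding left_module_rep_def
proof (intro conjI allI)
  let ?E = "\<lambda>s. mat_unit (deg l) (s, s)" and ?c = "\<lambda>s. c l (enum l s) (enum l s)"
  have cs: "?c s \<in> cell_ideal (ge l)" if "s < deg l" for s
    using l that enum_in self_in_ge by (intro c_in_cell_ideal) auto
  note eqI = mat_eqI_mat_unit[where n = "deg l"]
  note rep = block_rep_mult_mat_unit[OF l]
  show "block_rep l a \<in> carrier_mat (deg l) (deg l)" for a by simp
  show "block_rep l (a + b) = block_rep l a + block_rep l b" for a b
    by (rule eqI)
      (simp_all add: rep add_mult_distrib_mat[OF block_rep_carrier block_rep_carrier mat_unit_carrier]
        distrib_right block_add l)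
  show "block_rep l (sc r a) = r \<cdot>\<^sub>m block_rep l a" for r a
    by (rule eqI)
      (simp_all add: rep mult_smult_assoc_mat[OF block_rep_carrier mat_unit_carrier] scale_mult_left[symmetric]
        block_scale l)
  show "block_rep l (a * b) = block_rep l a * block_rep l b" for a b
  proof (rule eqI)
    fix s assume s: "s < deg l"
    have "block_rep l (a * b) * ?E s = block l (a * (b * ?c s))" by (simp add: rep s mult.assoc)
    also have "\<dots> = block_rep l a * (block_rep l b * ?E s)"
      by (simp add: block_mult_left[OF ord_ideal_ge minimal_in_ge[OF l]] cell_ideal_mult_left[OF ord_ideal_ge]
          cs s rep)
    also have "\<dots> = block_rep l a * block_rep l b * ?E s"
      by (simp add: assoc_mult_mat[of _ "deg l" "deg l" _ "deg l" _ "deg l"])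
    finally show "block_rep l (a * b) * ?E s = block_rep l a * block_rep l b * ?E s" .
  qed (simp_all add: mult_carrier_mat[OF block_rep_carrier block_rep_carrier])
  show "block_rep l 1 = 1\<^sub>m (deg l)"
    by (rule eqI) (simp_all add: rep block_c l)
qed

lemma block_image:
  assumes l: "l \<in> G'" "l \<in> Lam"
  shows "block l ` cell_ideal G' = carrier_mat (deg l) (deg l)"
proof
  show "block l ` cell_ideal G' \<subseteq> carrier_mat (deg l) (deg l)" by auto
  show "carrier_mat (deg l) (deg l) \<subseteq> block l ` cell_ideal G'"
  proof
    fix M :: "'r mat" assume M: "M \<in> carrier_mat (deg l) (deg l)"
    let ?K = "mat_index (deg l)"
    let ?x = "\<Sum>k\<in>?K. sc (M $$ k) (c l (enum l (fst k)) (enum l (snd k)))"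
    have x_in: "?x \<in> cell_ideal G'"
      using l enum_in
      by (intro subspace_sum[OF subspace_cell_ideal] subspace_scale[OF subspace_cell_ideal] c_in_cell_ideal)
         (auto simp: mat_index_def)
    have x_M: "block l ?x = M"
    proof (rule eq_matI)
      fix p q assume "p < dim_row M" "q < dim_col M"
      then have pq: "p < deg l" "q < deg l" using M by auto
      have j: "(l, enum l p, enum l q) \<in> triples" using enum_triples[OF l(2) pq] .
      have "block l ?x $$ (p, q)
          = (\<Sum>k\<in>?K. M $$ k * coord (c l (enum l (fst k)) (enum l (snd k))) (l, enum l p, enum l q))"
        using pq by (simp add: block_index coord_sum[OF j] coord_scale[OF j])
      also have "\<dots> = (\<Sum>k\<in>?K. if k = (p, q) then M $$ k else 0)"
      proof (rule sum.cong[OF refl])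
        fix k assume k: "k \<in> ?K"
        then obtain s t where st: "k = (s, t)" "s < deg l" "t < deg l" by (cases k) auto
        then show "M $$ k * coord (c l (enum l (fst k)) (enum l (snd k))) (l, enum l p, enum l q)
            = (if k = (p, q) then M $$ k else 0)"
          using j pq l(2) by (auto simp: coord_c enum_in enum_inj)
      qed
      also have "\<dots> = M $$ (p, q)" using pq by simp
      finally show "block l ?x $$ (p, q) = M $$ (p, q)" .
    qed (use M in auto)
    show "M \<in> block l ` cell_ideal G'" by (rule image_eqI[where f = "block l", OF x_M[symmetric] x_in])
  qed
qed

lemma block_eq_zero_iff:
  assumes diff: "G' - G = {l}" and l: "l \<in> Lam" and x: "x \<in> cell_ideal G'"
  shows "block l x = 0\<^sub>m (deg l) (deg l) \<longleftrightarrow> x \<in> cell_ideal G"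
proof
  assume x0: "x \<in> cell_ideal G"
  show "block l x = 0\<^sub>m (deg l) (deg l)" by (rule block_notin[OF x0 _ l]) (use diff in blast)
next
  assume zero: "block l x = 0\<^sub>m (deg l) (deg l)"
  show "x \<in> cell_ideal G"
    unfolding cell_ideal_iff_coord
  proof (intro ballI impI)
    fix j assume j: "j \<in> triples" and jG: "fst j \<notin> G"
    obtain m u w where juw: "j = (m, u, w)" by (cases j)
    show "coord x j = 0"
    proof (cases "m = l")
      case True
      obtain p where "p < deg l" "u = enum l p" using enum_surj[OF l, of u] j juw True by auto
      moreover obtain q where "q < deg l" "w = enum l q" using enum_surj[OF l, of w] j juw True by auto
      ultimately show ?thesis using juw True arg_cong[OF zero, of "\<lambda>M. M $$ (p, q)"]
        by (simp add: block_index)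
    next
      case False
      then have "m \<notin> G'" using jG juw diff by auto
      then show ?thesis using x j juw cell_ideal_iff_coord by auto
    qed
  qed
qed

lemma cell_iso_block:
  assumes G: "ord_ideal G" and G': "ord_ideal G'" and sub: "G \<subseteq> G'" and diff: "G' - G = {l}"
  shows "cell_iso sc i (deg l) (block_rep l) (cell_ideal G) (cell_ideal G') (block l)"
proof -
  have lG': "l \<in> G'" using diff by auto
  have l: "l \<in> Lam" using ord_ideal_subset[OF G'] lG' by blast
  have lmin: "minimal_in G' l" by (rule minimal_in_Diff[OF G diff])
  show ?thesis
    unfolding cell_iso_def
  proof (intro conjI ballI allI)
    show "block l ` cell_ideal G' = carrier_mat (deg l) (deg l)" by (rule block_image[OF lG' l])
    show "block l (x + y) = block l x + block l y" for x y by (rule block_add[OF l])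
    show "block l (sc r x) = r \<cdot>\<^sub>m block l x" for r x by (rule block_scale[OF l])
    show "(block l x = 0\<^sub>m (deg l) (deg l)) = (x \<in> cell_ideal G)" if "x \<in> cell_ideal G'" for x
      by (rule block_eq_zero_iff[OF diff l that])
    show "block l (a * x) = block_rep l a * block l x" if "x \<in> cell_ideal G'" for a x
      by (rule block_mult_left[OF G' lmin that])
    show "block l (x * a) = block l x * transpose_mat (block_rep l (i a))" if "x \<in> cell_ideal G'" for a x
      by (rule block_mult_right[OF G' lmin that])
    show "block l (i x) = transpose_mat (block l x)" if "x \<in> cell_ideal G'" for x
      by (rule block_involution[OF G' lmin that])
  qed
qed

lemma is_cell_net_datum: "is_cell_net sc i Lam Le cell_ideal"
  unfolding is_cell_net_def
proof (intro conjI allI impI ballI)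
  show "two_sided_ideal (cell_ideal G)" if "ord_ideal G" for G by (rule two_sided_ideal_cell_ideal[OF that])
  show "i ` cell_ideal G \<subseteq> cell_ideal G" if "ord_ideal G" for G using cell_ideal_involution[OF that] by blast
  show "cell_ideal {} = {0}" by (rule cell_ideal_empty)
  show "cell_ideal G1 \<subseteq> cell_ideal G2" if "G1 \<subseteq> G2" for G1 G2 by (rule cell_ideal_mono[OF that])
  show "span (\<Union>m\<in>Lam. cell_ideal (ge m)) = UNIV"
    using cell_ideal_ge_generate[OF ord_ideal_Lam] cell_ideal_Lam by simp
  show "cell_ideal (gt l) = span (\<Union>m\<in>gt l. cell_ideal (ge m))" for l
    by (rule cell_ideal_ge_generate[OF ord_ideal_gt])
  show "\<exists>n rho. left_module_rep sc n rho \<and>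
      (\<forall>G G'. ord_ideal G \<longrightarrow> ord_ideal G' \<longrightarrow> G \<subseteq> G' \<longrightarrow> G' - G = {l} \<longrightarrow>
         (\<exists>alpha. cell_iso sc i n rho (cell_ideal G) (cell_ideal G') alpha))" if "l \<in> Lam" for l
    using left_module_rep_block_rep[OF that] cell_iso_block by blast
qed

end

theorem mainTheorem2:
  fixes sc :: "'r::idom \<Rightarrow> 'a::ring_1 \<Rightarrow> 'a"
    and i :: "'a \<Rightarrow> 'a"
    and Lam :: "'l set"
    and Le :: "('l \<times> 'l) set"
  assumes "R_algebra sc"
    and "involution sc i"
    and "finite Lam"
    and "partial_order_on Lam Le"
  shows "has_cell_datum sc i Lam Le \<longleftrightarrow> has_cell_net sc i Lam Le"
proof -
  have alg: "involutive_algebra sc i"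
    using assms(1,2) unfolding R_algebra_def involution_def involutive_algebra_def
      involutive_algebra_axioms_def by blast
  have poset: "finite_poset Lam Le"
    using assms(3,4) by (simp add: finite_poset_def)
  show ?thesis
  proof
    assume "has_cell_datum sc i Lam Le"
    then obtain T c where "is_cell_datum sc i Lam Le T c" unfolding has_cell_datum_def by blast
    then interpret cell_datum_algebra sc i Lam Le T c
      using alg poset by (simp add: cell_datum_algebra_def cell_datum_algebra_axioms_def)
    show "has_cell_net sc i Lam Le" unfolding has_cell_net_def using is_cell_net_datum by blast
  next
    assume "has_cell_net sc i Lam Le"
    then obtain N where "is_cell_net sc i Lam Le N" unfolding has_cell_net_def by blast
    then interpret cell_net_algebra sc i Lam Le N
      using alg poset by (simp add: cell_net_algebra_def cell_net_algebra_axioms_def)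
    show "has_cell_datum sc i Lam Le" unfolding has_cell_datum_def using is_cell_datum_net by blast
  qed
qed

end
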